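(* Let $G=(V,E,\vec c)$ be a directed graph with non-negative vector edge costs $\vec c:E\to(\mathbb{R}^{\geq 0})^M$, let $v_s,v_d\in V$, and let $\vec h$ be a consistent heuristic. Run the algorithm RME-MOA* (described in the context) on this input with $\vec D=\vec 0$ and an arbitrary $\vec C\in(\mathbb{R}^{\geq 0})^M$. Then RME-MOA* computes a maximal cost-unique Pareto-optimal solution set: the set of paths represented by the labels in the returned set $\mathcal S$ is a maximal cost-unique Pareto-optimal solution set for the given graph, start vertex and destination vertex.
   Context: Setting. $G=(V,E,\vec c)$ is a directed graph, $\vec c:E\to(\mathbb{R}^{\geq 0})^M$ assigns to each edge a non-negative cost vector with $M$ objectives; $Succs(v)=\{v'\in V:(v,v')\in E\}$. A path $\pi(v_1,v_n)$ is a vertex sequence $v_1,\dots,v_n$ with $(v_i,v_{i+1})\in E$; its cost is $\vec g(\pi)=\sum_{i=1}^{n-1}\vec c(v_i,v_{i+1})$. For $\vec a,\vec b\in\mathbb{R}^M$: $\vec a$ dominates $\vec b$ ($\vec a\prec\vec b$) iff $a_i\le b_i$ for all $i$ and $\vec a\ne\vec b$; $\vec a$ weakly dominates $\vec b$ ($\vec a\preceq\vec b$) iff $a_i\le b_i$ for all $i$. A Pareto-optimal solution is a path $\pi^*$ from $v_s$ to $v_d$ such that no path $\pi'$ from $v_s$ to $v_d$ has $\vec g(\pi')\prec\vec g(\pi^* )$. A maximal cost-unique Pareto-optimal solution set is a maximal subset of the set of all Pareto-optimal solutions in which no two paths have the same cost. A heuristic $\vec h:V\to(\mathbb{R}^{\geq0})^M$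 is consistent iff $\vec h(v_d)=\vec 0$ and $\vec h(v)\le\vec c(v,v')+\vec h(v')$ componentwise for all $(v,v')\in E$. $<_{lex},\le_{lex},>_{lex},\min_{lex}$ denote lexicographic comparison/minimum of vectors; $\vec\infty$ is the all-infinity vector; $\vec h(v)<\vec D$ means strict inequality in every component. Labels. A label $l$ is an object carrying a vertex $v(l)$, vectors $\vec g(l),\vec f(l),\vec r(l)$, and a parent label $parent(l)$; it represents the path obtained by following parent pointers back to the start label. Distinct labels are distinct objects even with equal data. Data structures and procedures. OPEN is a priority queue of labels ordered lexicographically by $\vec r$. For each $v\in V$, $\alpha(v)$ is a set of labels, initially empty. $\mathcal S$ is a set of solution labels, initially empty. - FrontierCheck($l$): returns false if $l$ itself has previously been inserted into $\alpha(v(l))$; otherwise returns true iff some $l''\in\alpha(v(l))$ has $\vec g(l'')\preceq\vec g(l)$. - UpdateFrontier($l$): if $l$ has previously been inserted into $\alpha(v(l))$, does nothing; otherwise deletes from $\alpha(v(l))$ every $l''$ with $\vec g(l)\prec\vec g(l'')$ and inserts $l$. - SolutionCheck($l$): returns true iff some $s\in\mathcal S$ has $\vec g(s)\preceq\vec f(l)$. - UpdateSolution($\mathcal S,l$): deletes from $\mathcal S$ every $s$ with $\vec g(l)\prec\vec g(s)$ and inserts $l$. - ThresholdCheck($l$) (relative to the current threshold set $\mathcal T$): returns true iff some $\vec t\in\mathcal T$ has $\vec t\prec\vec f(l)$. - UpdateThreshold($\mathcal T_n,l$): deletes from $\mathcal T_n$ every vector dominated by $\vec f(l)$ and inserts $\vec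 f(l)$. Algorithm RME-MOA* (parameters $\vec C,\vec D\in(\mathbb{R}^{\geq0})^M$). 1. Create label $l_s$ with $v(l_s)=v_s$, $\vec g(l_s)=\vec 0$, $\vec f(l_s)=\vec r(l_s)=\vec h(v_s)$; insert into OPEN. 2. While OPEN is nonempty: remove the label $l$ with lexicographically smallest $\vec r$. (a) If FrontierCheck($l$) or SolutionCheck($l$) is true, discard $l$ and continue. (b) If $v(l)=v_d$: UpdateSolution($\mathcal S,l$) and continue. (c) UpdateFrontier($l$). (d) If $\vec h(v(l))<\vec D$: run the subroutine PIDMOA*($v(l),\vec g(l)$) below and continue. (e) Set $\vec r_{next}=\vec\infty$. For each $v'\in Succs(v(l))$: create $l'$ with $v(l')=v'$, $\vec g(l')=\vec g(l)+\vec c(v(l),v')$, $\vec f(l')=\vec r(l')=\vec g(l')+\vec h(v')$, $parent(l')=l$. If $\vec f(l')<_{lex}\vec r(l)$, skip $l'$. Else if FrontierCheck($l'$) or SolutionCheck($l'$) is true, skip $l'$. Else if $\vec f(l')>_{lex}\vec r(l)+\vec C$, set $\vec r_{next}=\min_{lex}(\vec r_{next},\vec f(l'))$ and skip $l'$. Otherwise insert $l'$ into OPEN. (f) If $\vec r_{next}\ne\vec\infty$: set $\vec r(l)=\vec r_{next}$ and reinsert $l$ into OPEN. 3. Return $\mathcal S$. Subroutine PIDMOA*($v_p,\vec g_p$): create label $l_p$ with $v(l_p)=v_p$, $\vec g(l_p)=\vec g_p$, $\vec f(l_p)=\vec g_p+\vec h(v_p)$; set $\mathcal T=\{\vec h(v_p)\}$.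 While $\mathcal T\ne\emptyset$: push $l_p$ on a LIFO stack OPEN_DFS, set $\mathcal T_n=\emptyset$; while OPEN_DFS is nonempty: pop $l$; if SolutionCheck($l$), continue; for each $v'\in Succs(v(l))$ create $l'$ with $v(l')=v'$, $\vec g(l')=\vec g(l)+\vec c(v(l),v')$, $\vec f(l')=\vec g(l')+\vec h(v')$, $parent(l')=l$; if SolutionCheck($l'$), skip; else if ThresholdCheck($l'$), do UpdateThreshold($\mathcal T_n,l'$) and skip; else if $v'=v_d$, do UpdateSolution($\mathcal S,l'$) and skip; else push $l'$ on OPEN_DFS. When OPEN_DFS is empty, set $\mathcal T=\mathcal T_n$. (With $\vec D=\vec 0$ this subroutine is never called, since $\vec h\ge\vec 0$.) *)

theory Defs
  imports Complex_Main
begin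

section \<open>Vectors in R^M, represented as functions nat => real (only components i < M matter)\<close>

type_synonym vec = "nat \<Rightarrow> real"

definition vadd :: "vec \<Rightarrow> vec \<Rightarrow> vec" where
  "vadd a b = (\<lambda>i. a i + b i)"

definition veq :: "nat \<Rightarrow> vec \<Rightarrow> vec \<Rightarrow> bool" where
  "veq M a b \<longleftrightarrow> (\<forall>i<M. a i = b i)"

definition vle :: "nat \<Rightarrow> vec \<Rightarrow> vec \<Rightarrow> bool" where
  "vle M a b \<longleftrightarrow> (\<forall>i<M. a i \<le> b i)"

definition vdom :: "nat \<Rightarrow> vec \<Rightarrow> vec \<Rightarrow> bool" where
  "vdom M a b \<longleftrightarrow> vle M a b \<and> \<not> veq M a b"

definition vlt :: "nat \<Rightarrow> vec \<Rightarrow> vec \<Rightarrow> bool" where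
  "vlt M a b \<longleftrightarrow> (\<forall>i<M. a i < b i)"

definition lex_less :: "nat \<Rightarrow> vec \<Rightarrow> vec \<Rightarrow> bool" where
  "lex_less M a b \<longleftrightarrow> (\<exists>k<M. (\<forall>i<k. a i = b i) \<and> a k < b k)"

definition lex_le :: "nat \<Rightarrow> vec \<Rightarrow> vec \<Rightarrow> bool" where
  "lex_le M a b \<longleftrightarrow> lex_less M a b \<or> veq M a b"

text \<open>lexicographic minimum; None encodes the all-infinity vector\<close>
fun lexmin :: "nat \<Rightarrow> vec option \<Rightarrow> vec \<Rightarrow> vec" where
  "lexmin M None f = f"
| "lexmin M (Some r) f = (if lex_less M f r then f else r)"

definition is_path :: "('v \<times> 'v) set \<Rightarrow> 'v list \<Rightarrow> bool" where
  "is_path E p \<longleftrightarrow> p \<noteq> [] \<and> (\<forall>i. Suc i < length p \<longrightarrow> (p ! i, p ! Suc i) \<in> E)"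

definition st_path :: "('v \<times> 'v) set \<Rightarrow> 'v \<Rightarrow> 'v \<Rightarrow> 'v list \<Rightarrow> bool" where
  "st_path E vs vd p \<longleftrightarrow> is_path E p \<and> hd p = vs \<and> last p = vd"

definition path_cost :: "('v \<Rightarrow> 'v \<Rightarrow> vec) \<Rightarrow> 'v list \<Rightarrow> vec" where
  "path_cost c p = (\<lambda>k. \<Sum>i<length p - 1. c (p ! i) (p ! Suc i) k)"

definition pareto_paths :: "('v \<times> 'v) set \<Rightarrow> ('v \<Rightarrow> 'v \<Rightarrow> vec) \<Rightarrow> nat \<Rightarrow> 'v \<Rightarrow> 'v \<Rightarrow> 'v list set" where
  "pareto_paths E c M vs vd =
     {p. st_path E vs vd p \<and>
         \<not> (\<exists>q. st_path E vs vd q \<and> vdom M (path_cost c q) (path_cost c p))}"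

definition cost_unique :: "('v \<Rightarrow> 'v \<Rightarrow> vec) \<Rightarrow> nat \<Rightarrow> 'v list set \<Rightarrow> bool" where
  "cost_unique c M P \<longleftrightarrow>
     (\<forall>p\<in>P. \<forall>q\<in>P. p \<noteq> q \<longrightarrow> \<not> veq M (path_cost c p) (path_cost c q))"

definition max_cost_unique_pareto_set ::
  "('v \<times> 'v) set \<Rightarrow> ('v \<Rightarrow> 'v \<Rightarrow> vec) \<Rightarrow> nat \<Rightarrow> 'v \<Rightarrow> 'v \<Rightarrow> 'v list set \<Rightarrow> bool" where
  "max_cost_unique_pareto_set E c M vs vd P \<longleftrightarrow>
     P \<subseteq> pareto_paths E c M vs vd \<and> cost_unique c M P \<and>
     (\<forall>Q. P \<subseteq> Q \<and> Q \<subseteq> pareto_paths E c M vs vd \<and> cost_unique c M Q \<longrightarrow> Q = P)"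

definition consistent_heuristic ::
  "'v set \<Rightarrow> ('v \<times> 'v) set \<Rightarrow> ('v \<Rightarrow> 'v \<Rightarrow> vec) \<Rightarrow> nat \<Rightarrow> 'v \<Rightarrow> ('v \<Rightarrow> vec) \<Rightarrow> bool" where
  "consistent_heuristic V E c M vd h \<longleftrightarrow>
     (\<forall>v\<in>V. \<forall>i<M. 0 \<le> h v i) \<and>
     (\<forall>i<M. h vd i = 0) \<and>
     (\<forall>(v, v')\<in>E. \<forall>i<M. h v i \<le> c v v' i + h v' i)"

text \<open>Labels are objects identified by a natural-number id; the store maps ids to label data.\<close>
record 'v lab =
  lv :: 'v
  lg :: vec
  lf :: vec
  lr :: vec
  lpar :: "nat option"

datatype 'v mode =
    Main
  | Exp nat "'v list" "vec option"    \<comment> \<open>expanding label, remaining successors, r_next (None = infinity)\<close>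
  | PidT nat "vec set"                \<comment> \<open>PIDMOA* outer loop: l_p, threshold set T\<close>
  | PidIn nat "vec set" "vec set" "nat list"   \<comment> \<open>l_p, T, T_n, OPEN_DFS stack\<close>
  | PidE nat "vec set" "vec set" "nat list" nat "'v list"  \<comment> \<open>... popped label, remaining successors\<close>
  | Done

record 'v rstate =
  store :: "nat \<Rightarrow> 'v lab"
  fresh :: nat
  opn :: "nat set"
  alpha :: "'v \<Rightarrow> nat set"
  hist :: "nat set"           \<comment> \<open>labels ever inserted into their frontier set alpha\<close>
  sol :: "nat set"
  mode :: "'v mode"

definition frontier_check :: "nat \<Rightarrow> 'v rstate \<Rightarrow> nat \<Rightarrow> bool" where
  "frontier_check M s l \<longleftrightarrow> l \<notin> hist s \<and>
     (\<exists>l2\<in>alpha s (lv (store s l)). vle M (lg (store s l2)) (lg (store s l)))"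

definition update_frontier :: "nat \<Rightarrow> 'v rstate \<Rightarrow> nat \<Rightarrow> 'v rstate" where
  "update_frontier M s l =
     (if l \<in> hist s then s
      else (let v = lv (store s l) in
        s\<lparr>alpha := (alpha s)(v := {l2 \<in> alpha s v. \<not> vdom M (lg (store s l)) (lg (store s l2))} \<union> {l}),
          hist := insert l (hist s)\<rparr>))"

definition sol_check :: "nat \<Rightarrow> 'v rstate \<Rightarrow> nat \<Rightarrow> bool" where
  "sol_check M s l \<longleftrightarrow> (\<exists>x\<in>sol s. vle M (lg (store s x)) (lf (store s l)))"

definition update_sol :: "nat \<Rightarrow> 'v rstate \<Rightarrow> nat \<Rightarrow> nat set" where
  "update_sol M s l = {x \<in> sol s. \<not> vdom M (lg (store s l)) (lg (store s x))} \<union> {l}"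

definition threshold_check :: "nat \<Rightarrow> vec set \<Rightarrow> vec \<Rightarrow> bool" where
  "threshold_check M T f \<longleftrightarrow> (\<exists>t\<in>T. vdom M t f)"

definition update_threshold :: "nat \<Rightarrow> vec set \<Rightarrow> vec \<Rightarrow> vec set" where
  "update_threshold M Tn f = {t \<in> Tn. \<not> vdom M f t} \<union> {f}"

definition add_label :: "'v rstate \<Rightarrow> 'v lab \<Rightarrow> 'v rstate" where
  "add_label s x = s\<lparr>store := (store s)(fresh s := x), fresh := Suc (fresh s)\<rparr>"

definition child :: "('v \<Rightarrow> 'v \<Rightarrow> vec) \<Rightarrow> ('v \<Rightarrow> vec) \<Rightarrow> 'v rstate \<Rightarrow> nat \<Rightarrow> 'v \<Rightarrow> 'v lab" where
  "child c h s l v' =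
     (let L = store s l; g' = vadd (lg L) (c (lv L) v'); f' = vadd g' (h v') in
      \<lparr>lv = v', lg = g', lf = f', lr = f', lpar = Some l\<rparr>)"

definition rme_init :: "('v \<Rightarrow> vec) \<Rightarrow> 'v \<Rightarrow> 'v rstate" where
  "rme_init h vs =
     \<lparr>store = (\<lambda>_. \<lparr>lv = vs, lg = (\<lambda>_. 0), lf = h vs, lr = h vs, lpar = None\<rparr>),
      fresh = 1, opn = {0}, alpha = (\<lambda>_. {}), hist = {}, sol = {}, mode = Main\<rparr>"

text \<open>Small-step semantics of RME-MOA* (including the subroutine PIDMOA*).
  Nondeterminism: tie-breaking in OPEN and the order in which successors are enumerated.\<close>
inductive rme_step ::
  "('v \<times> 'v) set \<Rightarrow> ('v \<Rightarrow> 'v \<Rightarrow> vec) \<Rightarrow> ('v \<Rightarrow> vec) \<Rightarrow> 'v \<Rightarrow> nat \<Rightarrow> vec \<Rightarrow> vec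
   \<Rightarrow> 'v rstate \<Rightarrow> 'v rstate \<Rightarrow> bool"
  for E c h vd M C D
where
  main_done:
    "mode s = Main \<Longrightarrow> opn s = {} \<Longrightarrow> rme_step E c h vd M C D s (s\<lparr>mode := Done\<rparr>)"
| main_discard:
    "mode s = Main \<Longrightarrow> l \<in> opn s \<Longrightarrow>
     (\<forall>l2\<in>opn s. lex_le M (lr (store s l)) (lr (store s l2))) \<Longrightarrow>
     frontier_check M s l \<or> sol_check M s l \<Longrightarrow>
     rme_step E c h vd M C D s (s\<lparr>opn := opn s - {l}\<rparr>)"
| main_goal:
    "mode s = Main \<Longrightarrow> l \<in> opn s \<Longrightarrow>
     (\<forall>l2\<in>opn s. lex_le M (lr (store s l)) (lr (store s l2))) \<Longrightarrow>
     \<not> frontier_check M s l \<Longrightarrow> \<not> sol_check M s l \<Longrightarrow>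
     lv (store s l) = vd \<Longrightarrow>
     rme_step E c h vd M C D s (s\<lparr>opn := opn s - {l}, sol := update_sol M s l\<rparr>)"
| main_pid:
    "mode s = Main \<Longrightarrow> l \<in> opn s \<Longrightarrow>
     (\<forall>l2\<in>opn s. lex_le M (lr (store s l)) (lr (store s l2))) \<Longrightarrow>
     \<not> frontier_check M s l \<Longrightarrow> \<not> sol_check M s l \<Longrightarrow>
     lv (store s l) \<noteq> vd \<Longrightarrow>
     vlt M (h (lv (store s l))) D \<Longrightarrow>
     s1 = update_frontier M (s\<lparr>opn := opn s - {l}\<rparr>) l \<Longrightarrow>
     L = store s l \<Longrightarrow>
     rme_step E c h vd M C D s
       ((add_label s1 \<lparr>lv = lv L, lg = lg L, lf = vadd (lg L) (h (lv L)),
                       lr = vadd (lg L) (h (lv L)), lpar = lpar L\<rparr>)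
          \<lparr>mode := PidT (fresh s1) {h (lv L)}\<rparr>)"
| main_exp:
    "mode s = Main \<Longrightarrow> l \<in> opn s \<Longrightarrow>
     (\<forall>l2\<in>opn s. lex_le M (lr (store s l)) (lr (store s l2))) \<Longrightarrow>
     \<not> frontier_check M s l \<Longrightarrow> \<not> sol_check M s l \<Longrightarrow>
     lv (store s l) \<noteq> vd \<Longrightarrow>
     \<not> vlt M (h (lv (store s l))) D \<Longrightarrow>
     distinct xs \<Longrightarrow> set xs = {v'. (lv (store s l), v') \<in> E} \<Longrightarrow>
     rme_step E c h vd M C D s ((update_frontier M (s\<lparr>opn := opn s - {l}\<rparr>) l)\<lparr>mode := Exp l xs None\<rparr>)"
| exp_child:
    "mode s = Exp l (v' # todo) rn \<Longrightarrow>
     x = child c h s l v' \<Longrightarrow> s1 = add_label s x \<Longrightarrow> l' = fresh s \<Longrightarrow>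
     rme_step E c h vd M C D s
       (if lex_less M (lf x) (lr (store s l)) then s1\<lparr>mode := Exp l todo rn\<rparr>
        else if frontier_check M s1 l' \<or> sol_check M s1 l' then s1\<lparr>mode := Exp l todo rn\<rparr>
        else if lex_less M (vadd (lr (store s l)) C) (lf x)
          then s1\<lparr>mode := Exp l todo (Some (lexmin M rn (lf x)))\<rparr>
        else s1\<lparr>opn := insert l' (opn s1), mode := Exp l todo rn\<rparr>)"
| exp_end_inf:
    "mode s = Exp l [] None \<Longrightarrow> rme_step E c h vd M C D s (s\<lparr>mode := Main\<rparr>)"
| exp_end_reinsert:
    "mode s = Exp l [] (Some r) \<Longrightarrow>
     rme_step E c h vd M C D s
       (s\<lparr>store := (store s)(l := (store s l)\<lparr>lr := r\<rparr>), opn := insert l (opn s), mode := Main\<rparr>)"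
| pidT_end:
    "mode s = PidT lp T \<Longrightarrow> T = {} \<Longrightarrow> rme_step E c h vd M C D s (s\<lparr>mode := Main\<rparr>)"
| pidT_iter:
    "mode s = PidT lp T \<Longrightarrow> T \<noteq> {} \<Longrightarrow>
     rme_step E c h vd M C D s (s\<lparr>mode := PidIn lp T {} [lp]\<rparr>)"
| pidIn_end:
    "mode s = PidIn lp T Tn [] \<Longrightarrow> rme_step E c h vd M C D s (s\<lparr>mode := PidT lp Tn\<rparr>)"
| pidIn_skip:
    "mode s = PidIn lp T Tn (l # stk) \<Longrightarrow> sol_check M s l \<Longrightarrow>
     rme_step E c h vd M C D s (s\<lparr>mode := PidIn lp T Tn stk\<rparr>)"
| pidIn_exp:
    "mode s = PidIn lp T Tn (l # stk) \<Longrightarrow> \<not> sol_check M s l \<Longrightarrow>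
     distinct xs \<Longrightarrow> set xs = {v'. (lv (store s l), v') \<in> E} \<Longrightarrow>
     rme_step E c h vd M C D s (s\<lparr>mode := PidE lp T Tn stk l xs\<rparr>)"
| pidE_child:
    "mode s = PidE lp T Tn stk l (v' # todo) \<Longrightarrow>
     x = child c h s l v' \<Longrightarrow> s1 = add_label s x \<Longrightarrow> l' = fresh s \<Longrightarrow>
     rme_step E c h vd M C D s
       (if sol_check M s1 l' then s1\<lparr>mode := PidE lp T Tn stk l todo\<rparr>
        else if threshold_check M T (lf x)
          then s1\<lparr>mode := PidE lp T (update_threshold M Tn (lf x)) stk l todo\<rparr>
        else if v' = vd then s1\<lparr>sol := update_sol M s1 l', mode := PidE lp T Tn stk l todo\<rparr>
        else s1\<lparr>mode := PidE lp T Tn (l' # stk) l todo\<rparr>)"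
| pidE_end:
    "mode s = PidE lp T Tn stk l [] \<Longrightarrow>
     rme_step E c h vd M C D s (s\<lparr>mode := PidIn lp T Tn stk\<rparr>)"

inductive represents :: "(nat \<Rightarrow> 'v lab) \<Rightarrow> nat \<Rightarrow> 'v list \<Rightarrow> bool" for st where
  repr_root: "lpar (st l) = None \<Longrightarrow> represents st l [lv (st l)]"
| repr_step: "lpar (st l) = Some p \<Longrightarrow> represents st p ps \<Longrightarrow> represents st l (ps @ [lv (st l)])"

definition result_paths :: "'v rstate \<Rightarrow> 'v list set" where
  "result_paths s = {p. \<exists>l\<in>sol s. represents (store s) l p}"

definition rme_always_terminates ::
  "('v \<times> 'v) set \<Rightarrow> ('v \<Rightarrow> 'v \<Rightarrow> vec) \<Rightarrow> ('v \<Rightarrow> vec) \<Rightarrow> 'v \<Rightarrow> 'v \<Rightarrow> nat \<Rightarrow> vec \<Rightarrow> vec \<Rightarrow> bool" where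
  "rme_always_terminates E c h vs vd M C D \<longleftrightarrow>
     (\<forall>s. (rme_step E c h vd M C D)\<^sup>*\<^sup>* (rme_init h vs) s \<longrightarrow>
          mode s = Done \<or> (\<exists>s'. rme_step E c h vd M C D s s')) \<and>
     \<not> (\<exists>f. f 0 = rme_init h vs \<and> (\<forall>n. rme_step E c h vd M C D (f n) (f (Suc n))))"

end

theory Submission
  imports Defs
begin

text \<open>
  The run is analysed through an invariant of its states. Besides bookkeeping (a well-formed label
  store whose labels represent paths from \<open>v_s\<close>, frontier sets \<open>alpha\<close> weakly dominating every
  expanded label at their vertex, solutions forming an antichain at \<open>v_d\<close>), it states that every
  path \<open>q\<close> from \<open>v_s\<close> to \<open>v_d\<close> stays tracked: either some solution weakly dominates its cost,
  or a pending label -- one that will still generate its successor along \<open>q\<close> unpruned -- sits on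
  \<open>q\<close> with cost at most that of the corresponding prefix of \<open>q\<close>. Consistency of \<open>h\<close> makes each
  pruning test (solution check, frontier check, lexicographic keys) compatible with this. When the
  run stops nothing is pending, so every such path is weakly dominated by a returned solution, which
  together with the antichain property gives Pareto-optimality, cost-uniqueness and maximality.

  Termination follows from a lexicographic measure: expanded labels have distinct simple paths, so
  there are finitely many; a reinsertion strictly shrinks the set of successors deferred by the
  label's key; every other step consumes OPEN or the successors still to be generated.
\<close>

section \<open>Vectors and lexicographic order\<close>

lemma vle_refl: "vle M a a"
  by (simp add: vle_def)

lemma vle_trans [trans]: "vle M a b \<Longrightarrow> vle M b c \<Longrightarrow> vle M a c"
  unfolding vle_def by (meson order_trans)

lemma veq_sym: "veq M a b \<longleftrightarrow> veq M b a"
  unfolding veq_def by auto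

lemma vdom_imp_vle: "vdom M a b \<Longrightarrow> vle M a b"
  by (simp add: vdom_def)

lemma lex_less_trans: "lex_less M a b \<Longrightarrow> lex_less M b c \<Longrightarrow> lex_less M a c"
  unfolding lex_less_def
proof (elim exE conjE)
  fix k1 k2
  assume 1: "k1 < M" "\<forall>i<k1. a i = b i" "a k1 < b k1"
    and 2: "k2 < M" "\<forall>i<k2. b i = c i" "b k2 < c k2"
  show "\<exists>k<M. (\<forall>i<k. a i = c i) \<and> a k < c k"
  proof (cases "k1 \<le> k2")
    case True
    then show ?thesis using 1 2 by (intro exI[of _ k1]) (auto simp: le_less)
  next
    case False
    then show ?thesis using 1 2 by (intro exI[of _ k2]) auto
  qed
qed

lemma lex_less_veq_trans: "lex_less M a b \<Longrightarrow> veq M b c \<Longrightarrow> lex_less M a c"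
  unfolding lex_less_def veq_def by (elim exE conjE, rule_tac x=k in exI) auto

lemma veq_lex_less_trans: "veq M a b \<Longrightarrow> lex_less M b c \<Longrightarrow> lex_less M a c"
  unfolding lex_less_def veq_def by (elim exE conjE, rule_tac x=k in exI) auto

lemma lex_less_irrefl: "\<not> lex_less M a a"
  unfolding lex_less_def by auto

lemma lex_le_refl: "lex_le M a a"
  by (simp add: lex_le_def veq_def)

lemma lex_le_trans: "lex_le M a b \<Longrightarrow> lex_le M b c \<Longrightarrow> lex_le M a c"
proof -
  have "veq M a b \<Longrightarrow> veq M b c \<Longrightarrow> veq M a c" by (simp add: veq_def)
  then show "lex_le M a b \<Longrightarrow> lex_le M b c \<Longrightarrow> lex_le M a c"
    unfolding lex_le_def using lex_less_trans lex_less_veq_trans veq_lex_less_trans by blast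
qed

lemma lex_le_less_trans: "lex_le M a b \<Longrightarrow> lex_less M b c \<Longrightarrow> lex_less M a c"
  unfolding lex_le_def using lex_less_trans veq_lex_less_trans by blast

lemma lex_le_imp_not_less: "lex_le M a b \<Longrightarrow> \<not> lex_less M b a"
  using lex_le_less_trans lex_less_irrefl by blast

lemma lex_le_or_less: "lex_le M a b \<or> lex_less M b a"
proof (cases "veq M a b")
  case True
  then show ?thesis by (simp add: lex_le_def)
next
  case False
  then have "\<exists>k. k < M \<and> a k \<noteq> b k" unfolding veq_def by auto
  then obtain k where k: "k < M" "a k \<noteq> b k" and below: "\<forall>i<k. a i = b i"
    unfolding exists_least_iff[of "\<lambda>k. k < M \<and> a k \<noteq> b k"] by auto
  show ?thesis
  proof (cases "a k < b k")
    case True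
    then show ?thesis using k below unfolding lex_le_def lex_less_def by blast
  next
    case False
    then have "b k < a k" using k(2) by linarith
    then show ?thesis using k below unfolding lex_less_def by (intro disjI2 exI[of _ k]) auto
  qed
qed

lemma vle_imp_lex_le: "vle M a b \<Longrightarrow> lex_le M a b"
proof -
  assume ab: "vle M a b"
  have "\<not> lex_less M b a"
    using ab unfolding lex_less_def vle_def by (auto simp: not_less)
  then show ?thesis using lex_le_or_less[of M a b] by blast
qed

lemma lex_less_add_nonneg:
  "\<forall>i<M. 0 \<le> C i \<Longrightarrow> lex_less M (vadd r C) f \<Longrightarrow> lex_less M r f"
  by (rule lex_le_less_trans[OF vle_imp_lex_le]) (auto simp: vle_def vadd_def)

lemma ex_lex_le_minimum:
  "finite A \<Longrightarrow> A \<noteq> {} \<Longrightarrow> \<exists>x\<in>A. \<forall>y\<in>A. lex_le M (f x) (f y)"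
proof (induction A rule: finite_ne_induct)
  case (singleton x)
  then show ?case by (simp add: lex_le_refl)
next
  case (insert x A)
  then obtain m where m: "m \<in> A" "\<forall>y\<in>A. lex_le M (f m) (f y)" by blast
  show ?case
  proof (cases "lex_le M (f x) (f m)")
    case True
    then show ?thesis using m lex_le_trans lex_le_refl by blast
  next
    case False
    then have "lex_le M (f m) (f x)" using lex_le_or_less[of M "f x" "f m"] unfolding lex_le_def by blast
    then show ?thesis using m by blast
  qed
qed

lemma lexmin_lex_le_new: "lex_le M (lexmin M rn f) f"
  by (cases rn) (use lex_le_or_less[of M _ f] in \<open>auto simp: lex_le_def veq_def\<close>)

lemma lexmin_lex_le_old: "rn = Some r \<Longrightarrow> lex_le M (lexmin M rn f) r"
  by (auto simp: lex_le_def veq_def)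

lemma lexmin_cases: "lexmin M rn f = f \<or> rn = Some (lexmin M rn f)"
  by (cases rn) auto

section \<open>Paths and label paths\<close>

lemma is_path_snoc: "is_path E xs \<Longrightarrow> (last xs, v) \<in> E \<Longrightarrow> is_path E (xs @ [v])"
  unfolding is_path_def
proof (intro conjI allI impI)
  fix i
  assume xs: "xs \<noteq> [] \<and> (\<forall>i. Suc i < length xs \<longrightarrow> (xs ! i, xs ! Suc i) \<in> E)"
    and v: "(last xs, v) \<in> E" and i: "Suc i < length (xs @ [v])"
  show "((xs @ [v]) ! i, (xs @ [v]) ! Suc i) \<in> E"
  proof (cases "Suc i < length xs")
    case True
    then show ?thesis using xs by (simp add: nth_append)
  next
    case False
    then have "i = length xs - 1" "Suc i = length xs" using i by auto
    then show ?thesis using xs v by (simp add: nth_append last_conv_nth)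
  qed
qed simp

lemma path_cost_snoc:
  assumes "xs \<noteq> []"
  shows "path_cost c (xs @ [v]) = vadd (path_cost c xs) (c (last xs) v)"
proof -
  obtain n where n: "length xs = Suc n" using assms by (cases xs) auto
  have "(\<Sum>i<n. c ((xs @ [v]) ! i) ((xs @ [v]) ! Suc i) k) = (\<Sum>i<n. c (xs ! i) (xs ! Suc i) k)" for k
    by (rule sum.cong) (auto simp: nth_append n)
  moreover have "(xs @ [v]) ! n = last xs" using n assms by (simp add: nth_append last_conv_nth)
  ultimately show ?thesis using n unfolding path_cost_def vadd_def by (simp add: nth_append)
qed

definition seg_cost :: "('v \<Rightarrow> 'v \<Rightarrow> vec) \<Rightarrow> 'v list \<Rightarrow> nat \<Rightarrow> nat \<Rightarrow> vec" where
  "seg_cost c p k j = (\<lambda>m. \<Sum>i\<in>{k..<j}. c (p ! i) (p ! Suc i) m)"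

lemma seg_cost_whole: "seg_cost c p 0 (length p - 1) = path_cost c p"
  unfolding seg_cost_def path_cost_def by (simp add: atLeast0LessThan)

lemma seg_cost_empty: "seg_cost c p j j m = 0"
  unfolding seg_cost_def by simp

lemma seg_cost_single: "seg_cost c p j (Suc j) = c (p ! j) (p ! Suc j)"
  unfolding seg_cost_def by simp

lemma seg_cost_split: "k \<le> j \<Longrightarrow> j \<le> j' \<Longrightarrow> seg_cost c p k j' m = seg_cost c p k j m + seg_cost c p j j' m"
  unfolding seg_cost_def by (simp add: sum.atLeastLessThan_concat)

lemma seg_cost_Suc_left: "j < j' \<Longrightarrow> seg_cost c p j j' m = c (p ! j) (p ! Suc j) m + seg_cost c p (Suc j) j' m"
  unfolding seg_cost_def by (simp add: sum.atLeast_Suc_lessThan)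

text \<open>The guard \<open>p < l\<close> makes the recursion terminate on arbitrary stores; in reachable states
  parents precede their children, so it always holds.\<close>
function label_path :: "(nat \<Rightarrow> 'v lab) \<Rightarrow> nat \<Rightarrow> 'v list" where
  "label_path st l = (case lpar (st l) of
      None \<Rightarrow> [lv (st l)]
    | Some p \<Rightarrow> if p < l then label_path st p @ [lv (st l)] else [lv (st l)])"
  by pat_completeness auto
termination by (relation "measure snd") auto

declare label_path.simps [simp del]

lemma label_path_root: "lpar (st l) = None \<Longrightarrow> label_path st l = [lv (st l)]"
  by (subst label_path.simps) simp

lemma label_path_parent: "lpar (st l) = Some p \<Longrightarrow> p < l \<Longrightarrow> label_path st l = label_path st p @ [lv (st l)]"
  by (subst label_path.simps) simp

lemma label_path_parent_not_less: "lpar (st l) = Some p \<Longrightarrow> \<not> p < l \<Longrightarrow> label_path st l = [lv (st l)]"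
  by (subst label_path.simps) simp

lemma label_path_nonempty: "label_path st l \<noteq> []"
  by (subst label_path.simps) (simp split: option.splits)

lemma last_label_path: "last (label_path st l) = lv (st l)"
  by (subst label_path.simps) (simp split: option.splits)

lemma label_path_cong:
  "(\<And>i. i \<le> l \<Longrightarrow> lv (st' i) = lv (st i) \<and> lpar (st' i) = lpar (st i)) \<Longrightarrow> label_path st' l = label_path st l"
proof (induction l rule: less_induct)
  case (less l)
  have l: "lv (st' l) = lv (st l)" "lpar (st' l) = lpar (st l)" using less.prems[of l] by auto
  show ?case
  proof (cases "lpar (st l)")
    case None
    then show ?thesis using l by (simp add: label_path_root)
  next
    case (Some p)
    show ?thesis
    proof (cases "p < l")
      case True
      then have "label_path st' p = label_path st p" using less by simp
      then show ?thesis using Some True l by (simp add: label_path_parent)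
    next
      case False
      then show ?thesis using Some l by (simp add: label_path_parent_not_less)
    qed
  qed
qed

lemma vle_add_seg_cost:
  assumes "k \<le> j" "j \<le> j'" "vle M a (vadd b (seg_cost c p k j))"
  shows "vle M (vadd a (seg_cost c p j j')) (vadd b (seg_cost c p k j'))"
  using assms seg_cost_split[of k j j' c p] unfolding vle_def vadd_def by fastforce

section \<open>The invariant\<close>

locale rme_setting =
  fixes V :: "'v set" and E :: "('v \<times> 'v) set" and c :: "'v \<Rightarrow> 'v \<Rightarrow> vec"
    and h :: "'v \<Rightarrow> vec" and vs vd :: 'v and M :: nat and C :: vec
  assumes finite_V: "finite V" and E_subset: "E \<subseteq> V \<times> V" and vs_in_V: "vs \<in> V"
    and M_pos: "0 < M"
    and edge_cost_nonneg: "\<forall>(u, w)\<in>E. \<forall>i<M. 0 \<le> c u w i"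
    and consistent: "consistent_heuristic V E c M vd h"
    and C_nonneg: "\<forall>i<M. 0 \<le> C i"
begin

lemma cost_nonneg: "(u, w) \<in> E \<Longrightarrow> i < M \<Longrightarrow> 0 \<le> c u w i"
  using edge_cost_nonneg by auto

lemma h_dest: "i < M \<Longrightarrow> h vd i = 0"
  using consistent unfolding consistent_heuristic_def by auto

lemma h_nonneg: "v \<in> V \<Longrightarrow> i < M \<Longrightarrow> 0 \<le> h v i"
  using consistent unfolding consistent_heuristic_def by auto

lemma h_edge: "(u, w) \<in> E \<Longrightarrow> i < M \<Longrightarrow> h u i \<le> c u w i + h w i"
  using consistent unfolding consistent_heuristic_def by auto

definition succs :: "'v \<Rightarrow> 'v set" where
  "succs v = {v'. (v, v') \<in> E}"

lemma finite_succs: "finite (succs v)"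
proof -
  have "finite E" using finite_V E_subset by (meson finite_SigmaI finite_subset)
  moreover have "succs v \<subseteq> snd ` E" unfolding succs_def by force
  ultimately show ?thesis using finite_subset by blast
qed

definition child_f :: "(nat \<Rightarrow> 'v lab) \<Rightarrow> nat \<Rightarrow> 'v \<Rightarrow> vec" where
  "child_f st l v' = vadd (vadd (lg (st l)) (c (lv (st l)) v')) (h v')"

lemma child_simps:
  "lv (child c h s l v') = v'"
  "lg (child c h s l v') = vadd (lg (store s l)) (c (lv (store s l)) v')"
  "lf (child c h s l v') = child_f (store s) l v'"
  "lr (child c h s l v') = child_f (store s) l v'"
  "lpar (child c h s l v') = Some l"
  unfolding child_def child_f_def Let_def by simp_all

lemma f_le_child_f: "(lv (st l), v') \<in> E \<Longrightarrow> vle M (vadd (lg (st l)) (h (lv (st l)))) (child_f st l v')"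
  unfolding child_f_def vle_def vadd_def using h_edge by (simp add: add.assoc)

definition dest_path :: "'v list \<Rightarrow> bool" where
  "dest_path p \<longleftrightarrow> is_path E p \<and> last p = vd"

lemma dest_path_edge: "dest_path p \<Longrightarrow> Suc i < length p \<Longrightarrow> (p ! i, p ! Suc i) \<in> E"
  unfolding dest_path_def is_path_def by auto

lemma dest_path_last: "dest_path p \<Longrightarrow> p ! (length p - 1) = vd"
  unfolding dest_path_def is_path_def by (metis last_conv_nth)

lemma dest_path_Suc: "dest_path p \<Longrightarrow> j < length p \<Longrightarrow> p ! j \<noteq> vd \<Longrightarrow> Suc j < length p"
  using dest_path_last by (metis Suc_lessI diff_Suc_1)

lemma seg_cost_nonneg: "dest_path p \<Longrightarrow> j < length p \<Longrightarrow> m < M \<Longrightarrow> 0 \<le> seg_cost c p k j m"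
  unfolding seg_cost_def by (rule sum_nonneg) (auto intro!: cost_nonneg dest_path_edge)

lemma h_le_remaining_cost:
  "dest_path p \<Longrightarrow> j < length p \<Longrightarrow> i < M \<Longrightarrow> h (p ! j) i \<le> seg_cost c p j (length p - 1) i"
proof (induction "length p - 1 - j" arbitrary: j)
  case 0
  then have "j = length p - 1" by simp
  then show ?case using dest_path_last[OF 0(2)] h_dest[OF 0(4)] by (simp add: seg_cost_empty)
next
  case (Suc x)
  then have j: "Suc j < length p" by simp
  have "h (p ! j) i \<le> c (p ! j) (p ! Suc j) i + h (p ! Suc j) i"
    using h_edge[OF dest_path_edge[OF Suc(3) j] Suc(5)] .
  also have "\<dots> \<le> seg_cost c p j (length p - 1) i"
    using Suc j seg_cost_Suc_left[of j "length p - 1" c p i] by simp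
  finally show ?case .
qed

lemma f_le_remaining_cost:
  "dest_path p \<Longrightarrow> j < length p \<Longrightarrow> vle M (vadd g (h (p ! j))) (vadd g (seg_cost c p j (length p - 1)))"
  using h_le_remaining_cost unfolding vle_def vadd_def by simp

definition covered :: "'v rstate \<Rightarrow> vec \<Rightarrow> bool" where
  "covered s T \<longleftrightarrow> (\<exists>x\<in>sol s. vle M (lg (store s x)) T)"

lemma covered_mono: "covered s T \<Longrightarrow> vle M T T' \<Longrightarrow> covered s T'"
  unfolding covered_def using vle_trans by blast

text \<open>Label \<open>l\<close> at position \<open>j\<close> of \<open>p\<close> will still generate its child at \<open>p ! Suc j\<close> without pruning
  it by the lexicographic key. During an expansion the child may instead have been deferred: it is then
  accounted for by the key \<open>r_next\<close> (the last field of \<open>Exp\<close>) under which \<open>l\<close> will be reinserted.\<close>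
definition pending :: "'v rstate \<Rightarrow> nat \<Rightarrow> nat \<Rightarrow> 'v list \<Rightarrow> bool" where
  "pending s l j p \<longleftrightarrow>
    (l \<in> opn s \<and> (l \<in> hist s \<longrightarrow> Suc j < length p \<and> lex_le M (lr (store s l)) (child_f (store s) l (p ! Suc j)))) \<or>
    (\<exists>todo rn. mode s = Exp l todo rn \<and> Suc j < length p \<and>
      ((p ! Suc j \<in> set todo \<and> lex_le M (lr (store s l)) (child_f (store s) l (p ! Suc j))) \<or>
       (\<exists>r. rn = Some r \<and> lex_le M r (child_f (store s) l (p ! Suc j)))))"

definition tracked :: "'v rstate \<Rightarrow> 'v list \<Rightarrow> nat \<Rightarrow> vec \<Rightarrow> bool" where
  "tracked s p k b \<longleftrightarrow> covered s (vadd b (seg_cost c p k (length p - 1))) \<or>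
    (\<exists>l j. k \<le> j \<and> j < length p \<and> lv (store s l) = p ! j \<and>
       vle M (lg (store s l)) (vadd b (seg_cost c p k j)) \<and> pending s l j p)"

lemma tracked_at_label:
  "pending s l j p \<Longrightarrow> j < length p \<Longrightarrow> lv (store s l) = p ! j \<Longrightarrow> vle M (lg (store s l)) b \<Longrightarrow>
   tracked s p j b"
  unfolding tracked_def by (intro disjI2 exI[of _ l] exI[of _ j]) (simp add: seg_cost_empty vadd_def)

lemma tracked_prefix:
  assumes tr: "tracked s p j' b'" and kj: "k \<le> j'" and jl: "j' < length p"
    and b: "vle M b' (vadd b (seg_cost c p k j'))"
  shows "tracked s p k b"
  using tr unfolding tracked_def[of s p j' b']
proof (elim disjE exE conjE)
  assume "covered s (vadd b' (seg_cost c p j' (length p - 1)))"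
  then show ?thesis
    unfolding tracked_def using covered_mono vle_add_seg_cost[OF kj _ b] jl by auto
next
  fix l j
  assume l: "j' \<le> j" "j < length p" "lv (store s l) = p ! j"
    "vle M (lg (store s l)) (vadd b' (seg_cost c p j' j))" "pending s l j p"
  have "vle M (lg (store s l)) (vadd b (seg_cost c p k j))"
    using vle_trans[OF l(4) vle_add_seg_cost[OF kj l(1) b]] .
  then show ?thesis unfolding tracked_def using l kj by (intro disjI2 exI[of _ l] exI[of _ j]) auto
qed

lemma tracked_Suc_of_covered:
  assumes "Suc i < length p" "covered s (vadd g (seg_cost c p i (length p - 1)))"
  shows "tracked s p (Suc i) (vadd g (c (p ! i) (p ! Suc i)))"
proof -
  have "vadd (vadd g (c (p ! i) (p ! Suc i))) (seg_cost c p (Suc i) (length p - 1)) =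
      vadd g (seg_cost c p i (length p - 1))"
    using assms(1) seg_cost_Suc_left[of i "length p - 1" c p] by (simp add: vadd_def add.assoc)
  then show ?thesis using assms(2) unfolding tracked_def by simp
qed

lemma tracked_Suc_of_later:
  assumes "i < j'" "j' < length p" "vle M b' (vadd g (seg_cost c p i j'))" "tracked s p j' b'"
  shows "tracked s p (Suc i) (vadd g (c (p ! i) (p ! Suc i)))"
proof -
  have "vle M b' (vadd (vadd g (c (p ! i) (p ! Suc i))) (seg_cost c p (Suc i) j'))"
    using assms seg_cost_Suc_left[of i j' c p] unfolding vle_def vadd_def by (simp add: add.assoc)
  then show ?thesis using tracked_prefix assms by simp
qed

text \<open>The last alternative, tracking from the same position, is admitted only for labels never
  expanded: for expanded ones it would make the second half of \<open>inv_tracking\<close> circular.\<close>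
definition tracking_kept :: "'v rstate \<Rightarrow> 'v rstate \<Rightarrow> 'v list \<Rightarrow> nat \<Rightarrow> nat \<Rightarrow> bool" where
  "tracking_kept s s' p l j \<longleftrightarrow>
     (lv (store s' l) = lv (store s l) \<and> lg (store s' l) = lg (store s l) \<and> pending s' l j p) \<or>
     covered s' (vadd (lg (store s l)) (seg_cost c p j (length p - 1))) \<or>
     (\<exists>j' b'. j < j' \<and> j' < length p \<and> vle M b' (vadd (lg (store s l)) (seg_cost c p j j')) \<and>
         (tracked s p j' b' \<or> tracked s' p j' b')) \<or>
     (l \<notin> hist s \<and> tracked s' p j (lg (store s l)))"

lemma tracked_transfer:
  assumes cov: "\<And>T. covered s T \<Longrightarrow> covered s' T"
    and kept: "\<And>l j. j < length p \<Longrightarrow> lv (store s l) = p ! j \<Longrightarrow> pending s l j p \<Longrightarrow> tracking_kept s s' p l j"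
  shows "tracked s p k b \<Longrightarrow> tracked s' p k b"
proof (induction "length p - k" arbitrary: k b rule: less_induct)
  case less
  show ?case using less.prems unfolding tracked_def[of s]
  proof (elim disjE exE conjE)
    assume "covered s (vadd b (seg_cost c p k (length p - 1)))"
    then show ?thesis unfolding tracked_def using cov by blast
  next
    fix l j
    assume a: "k \<le> j" "j < length p" "lv (store s l) = p ! j"
      "vle M (lg (store s l)) (vadd b (seg_cost c p k j))" "pending s l j p"
    have further: "tracked s' p k b"
      if "j < j'" "j' < length p" "vle M b' (vadd (lg (store s l)) (seg_cost c p j j'))" "tracked s' p j' b'"
      for j' b'
      using that a vle_trans[OF that(3) vle_add_seg_cost[OF a(1) _ a(4)]] tracked_prefix by simp
    show ?thesis using kept[OF a(2,3,5)] unfolding tracking_kept_def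
    proof (elim disjE exE conjE)
      assume "lv (store s' l) = lv (store s l)" "lg (store s' l) = lg (store s l)" "pending s' l j p"
      then show ?thesis unfolding tracked_def using a by (intro disjI2) metis
    next
      assume "covered s' (vadd (lg (store s l)) (seg_cost c p j (length p - 1)))"
      then have "tracked s' p j (lg (store s l))" unfolding tracked_def by simp
      then show ?thesis using tracked_prefix a by blast
    next
      fix j' b'
      assume b: "j < j'" "j' < length p" "vle M b' (vadd (lg (store s l)) (seg_cost c p j j'))"
        "tracked s p j' b'"
      then show ?thesis using less.hyps[of j' b'] a further by simp
    next
      fix j' b'
      assume "j < j'" "j' < length p" "vle M b' (vadd (lg (store s l)) (seg_cost c p j j'))"
        "tracked s' p j' b'"
      then show ?thesis using further by blast
    next
      assume "l \<notin> hist s" "tracked s' p j (lg (store s l))"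
      then show ?thesis using tracked_prefix a by blast
    qed
  qed
qed

definition inv_labels :: "'v rstate \<Rightarrow> bool" where
  "inv_labels s \<longleftrightarrow> 0 < fresh s \<and> lv (store s 0) = vs \<and> lg (store s 0) = (\<lambda>_. 0) \<and> lpar (store s 0) = None \<and>
    (\<forall>l. 0 < l \<longrightarrow> l < fresh s \<longrightarrow> (\<exists>p. lpar (store s l) = Some p \<and> p < l \<and>
        (lv (store s p), lv (store s l)) \<in> E \<and>
        lg (store s l) = vadd (lg (store s p)) (c (lv (store s p)) (lv (store s l))))) \<and>
    (\<forall>l<fresh s. lf (store s l) = vadd (lg (store s l)) (h (lv (store s l))) \<and> lv (store s l) \<in> V) \<and>
    (\<forall>l<fresh s. l \<notin> hist s \<longrightarrow> lr (store s l) = lf (store s l))"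

definition inv_sets :: "'v rstate \<Rightarrow> bool" where
  "inv_sets s \<longleftrightarrow> opn s \<union> hist s \<union> sol s \<subseteq> {..<fresh s} \<and> (\<forall>l\<in>hist s. lv (store s l) \<noteq> vd) \<and>
    (\<forall>l\<in>opn s \<union> hist s. \<forall>p. lpar (store s l) = Some p \<longrightarrow> p \<in> hist s) \<and>
    (\<forall>l\<in>opn s \<union> hist s. distinct (label_path (store s) l))"

definition inv_frontier :: "'v rstate \<Rightarrow> bool" where
  "inv_frontier s \<longleftrightarrow> (\<forall>v. \<forall>l\<in>alpha s v. l \<in> hist s \<and> lv (store s l) = v) \<and>
    (\<forall>a\<in>hist s. \<exists>a'\<in>alpha s (lv (store s a)). vle M (lg (store s a')) (lg (store s a))) \<and>
    (\<forall>a\<in>hist s. \<forall>b\<in>hist s. a \<noteq> b \<longrightarrow> lv (store s a) = lv (store s b) \<longrightarrow>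
       \<not> veq M (lg (store s a)) (lg (store s b)))"

definition inv_solutions :: "'v rstate \<Rightarrow> bool" where
  "inv_solutions s \<longleftrightarrow> (\<forall>x\<in>sol s. lv (store s x) = vd) \<and>
    (\<forall>x\<in>sol s. \<forall>y\<in>sol s. x \<noteq> y \<longrightarrow> \<not> vle M (lg (store s x)) (lg (store s y)))"

definition inv_mode :: "'v rstate \<Rightarrow> bool" where
  "inv_mode s \<longleftrightarrow> mode s = Main \<or> (mode s = Done \<and> opn s = {}) \<or>
    (\<exists>l todo rn. mode s = Exp l todo rn \<and> l \<in> hist s \<and> l \<notin> opn s \<and> set todo \<subseteq> succs (lv (store s l)) \<and>
      (\<forall>r. rn = Some r \<longrightarrow>
         (\<exists>v'\<in>succs (lv (store s l)). r = child_f (store s) l v' \<and> lex_less M (lr (store s l)) r)))"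

definition inv_tracking :: "'v rstate \<Rightarrow> bool" where
  "inv_tracking s \<longleftrightarrow> (\<forall>q. st_path E vs vd q \<longrightarrow> tracked s q 0 (\<lambda>_. 0)) \<and>
    (\<forall>l\<in>hist s. \<forall>p i. dest_path p \<longrightarrow> Suc i < length p \<longrightarrow> p ! i = lv (store s l) \<longrightarrow>
       pending s l i p \<or> tracked s p (Suc i) (vadd (lg (store s l)) (c (p ! i) (p ! Suc i))))"

definition rme_inv :: "'v rstate \<Rightarrow> bool" where
  "rme_inv s \<longleftrightarrow> inv_labels s \<and> inv_sets s \<and> inv_frontier s \<and> inv_solutions s \<and> inv_mode s \<and> inv_tracking s"

lemma inv_labels_cong:
  "store s' = store s \<Longrightarrow> fresh s' = fresh s \<Longrightarrow> hist s' = hist s \<Longrightarrow> inv_labels s' = inv_labels s"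
  unfolding inv_labels_def by simp

lemma inv_frontier_cong:
  "store s' = store s \<Longrightarrow> hist s' = hist s \<Longrightarrow> alpha s' = alpha s \<Longrightarrow> inv_frontier s' = inv_frontier s"
  unfolding inv_frontier_def by simp

lemma inv_solutions_cong:
  "store s' = store s \<Longrightarrow> sol s' = sol s \<Longrightarrow> inv_solutions s' = inv_solutions s"
  unfolding inv_solutions_def by simp

lemma rme_inv_frame:
  assumes "rme_inv s" "store s' = store s" "fresh s' = fresh s" "hist s' = hist s" "alpha s' = alpha s"
    "sol s' = sol s" "opn s' \<subseteq> opn s" "inv_mode s'" "inv_tracking s'"
  shows "rme_inv s'"
proof -
  have "inv_sets s" using assms(1) by (simp add: rme_inv_def)
  then have "inv_sets s'" unfolding inv_sets_def assms(2-6) using assms(7) by blast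
  then show ?thesis
    using assms inv_labels_cong[of s' s] inv_frontier_cong[of s' s] inv_solutions_cong[of s' s]
    unfolding rme_inv_def by simp
qed

lemma inv_sets_fresh:
  "inv_sets s \<Longrightarrow> l \<in> opn s \<Longrightarrow> l < fresh s"
  "inv_sets s \<Longrightarrow> l \<in> hist s \<Longrightarrow> l < fresh s"
  "inv_sets s \<Longrightarrow> l \<in> sol s \<Longrightarrow> l < fresh s"
  unfolding inv_sets_def by auto

lemma inv_sets_not_dest: "inv_sets s \<Longrightarrow> l \<in> hist s \<Longrightarrow> lv (store s l) \<noteq> vd"
  unfolding inv_sets_def by auto

lemma inv_frontier_alpha: "inv_frontier s \<Longrightarrow> l \<in> alpha s v \<Longrightarrow> l \<in> hist s \<and> lv (store s l) = v"
  unfolding inv_frontier_def by auto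

lemma inv_frontier_dominated:
  "inv_frontier s \<Longrightarrow> a \<in> hist s \<Longrightarrow> \<exists>a'\<in>alpha s (lv (store s a)). vle M (lg (store s a')) (lg (store s a))"
  unfolding inv_frontier_def by blast

lemma inv_frontier_cost_unique:
  "inv_frontier s \<Longrightarrow> a \<in> hist s \<Longrightarrow> b \<in> hist s \<Longrightarrow> lv (store s a) = lv (store s b) \<Longrightarrow>
   veq M (lg (store s a)) (lg (store s b)) \<Longrightarrow> a = b"
  unfolding inv_frontier_def by blast

lemma inv_solutions_antichain:
  "inv_solutions s \<Longrightarrow> x \<in> sol s \<Longrightarrow> y \<in> sol s \<Longrightarrow> x \<noteq> y \<Longrightarrow> \<not> vle M (lg (store s x)) (lg (store s y))"
  unfolding inv_solutions_def by blast

lemma inv_labels_f: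
  "inv_labels s \<Longrightarrow> l < fresh s \<Longrightarrow> lf (store s l) = vadd (lg (store s l)) (h (lv (store s l)))"
  unfolding inv_labels_def by auto

lemma inv_labels_r:
  "inv_labels s \<Longrightarrow> l < fresh s \<Longrightarrow> l \<notin> hist s \<Longrightarrow> lr (store s l) = vadd (lg (store s l)) (h (lv (store s l)))"
  unfolding inv_labels_def by auto

lemma inv_labels_parent:
  assumes "inv_labels s" "0 < l" "l < fresh s"
  obtains p where "lpar (store s l) = Some p" "p < l" "(lv (store s p), lv (store s l)) \<in> E"
    "lg (store s l) = vadd (lg (store s p)) (c (lv (store s p)) (lv (store s l)))"
  using assms unfolding inv_labels_def by blast

lemma label_path_props:
  assumes I: "inv_labels s"
  shows "l < fresh s \<Longrightarrow> represents (store s) l (label_path (store s) l) \<and> is_path E (label_path (store s) l) \<and>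
     hd (label_path (store s) l) = vs \<and> path_cost c (label_path (store s) l) = lg (store s l) \<and>
     set (label_path (store s) l) \<subseteq> V"
proof (induction l rule: less_induct)
  case (less l)
  show ?case
  proof (cases "l = 0")
    case True
    then have "lpar (store s l) = None" "label_path (store s) l = [vs]"
      using I unfolding inv_labels_def by (auto simp: label_path_root)
    then show ?thesis using I True vs_in_V represents.repr_root[of "store s" l]
      unfolding inv_labels_def by (simp add: is_path_def path_cost_def)
  next
    case False
    with I less.prems obtain p where p: "lpar (store s l) = Some p" "p < l"
      "(lv (store s p), lv (store s l)) \<in> E"
      "lg (store s l) = vadd (lg (store s p)) (c (lv (store s p)) (lv (store s l)))"
      by (elim inv_labels_parent) auto
    let ?q = "label_path (store s) p"
    have ih: "represents (store s) p ?q \<and> is_path E ?q \<and> hd ?q = vs \<and> path_cost c ?q = lg (store s p) \<and>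
      set ?q \<subseteq> V" using less.IH[of p] p less.prems by simp
    have "lv (store s l) \<in> V" using I less.prems unfolding inv_labels_def by blast
    moreover have "label_path (store s) l = ?q @ [lv (store s l)]" using label_path_parent[of "store s" l p, OF p(1,2)] .
    ultimately show ?thesis
      using ih p label_path_nonempty[of "store s" p]
      by (auto intro: represents.repr_step is_path_snoc simp: path_cost_snoc last_label_path)
  qed
qed

lemma represents_label_path:
  assumes I: "inv_labels s"
  shows "represents (store s) l p \<Longrightarrow> l < fresh s \<Longrightarrow> p = label_path (store s) l"
proof (induction rule: represents.induct)
  case (repr_root l)
  then show ?case by (simp add: label_path_root)
next
  case (repr_step l p ps)
  have "l \<noteq> 0"
  proof
    assume "l = 0"
    then show False using repr_step.hyps(1) I unfolding inv_labels_def by simp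
  qed
  with I repr_step.prems obtain p' where "lpar (store s l) = Some p'" "p' < l"
    by (elim inv_labels_parent) auto
  then show ?case using repr_step label_path_parent[of "store s" l p] by simp
qed

lemma ancestor_dominated:
  assumes I: "inv_labels s" and S: "inv_sets s"
  shows "l \<in> hist s \<Longrightarrow> v \<in> set (label_path (store s) l) \<Longrightarrow>
     \<exists>a\<in>hist s. lv (store s a) = v \<and> vle M (lg (store s a)) (lg (store s l))"
proof (induction l rule: less_induct)
  case (less l)
  show ?case
  proof (cases "l = 0 \<or> v = lv (store s l)")
    case True
    then have "v = lv (store s l)"
      using less.prems I unfolding inv_labels_def by (auto simp: label_path_root)
    then show ?thesis using less.prems(1) vle_refl by blast
  next
    case False
    with I obtain p where p: "lpar (store s l) = Some p" "p < l" "(lv (store s p), lv (store s l)) \<in> E"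
      "lg (store s l) = vadd (lg (store s p)) (c (lv (store s p)) (lv (store s l)))"
      using inv_sets_fresh(2)[OF S less.prems(1)] by (elim inv_labels_parent) auto
    have "p \<in> hist s" using S less.prems(1) p(1) unfolding inv_sets_def by blast
    moreover have "v \<in> set (label_path (store s) p)"
      using less.prems False label_path_parent[of "store s" l p, OF p(1,2)] by simp
    ultimately obtain a where a: "a \<in> hist s" "lv (store s a) = v" "vle M (lg (store s a)) (lg (store s p))"
      using less.IH[OF p(2)] by blast
    have "vle M (lg (store s p)) (lg (store s l))"
      using p(4) cost_nonneg[OF p(3)] unfolding vle_def vadd_def by auto
    then show ?thesis using a vle_trans by blast
  qed
qed

lemma rme_inv_init: "rme_inv (rme_init h vs)"
proof -
  let ?s = "rme_init h vs"
  have "tracked ?s q 0 (\<lambda>_. 0)" if q: "st_path E vs vd q" for q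
  proof -
    from q have "q \<noteq> []" "q ! 0 = vs" unfolding st_path_def is_path_def by (auto simp: hd_conv_nth)
    then show ?thesis
      by (intro tracked_at_label[of _ 0]) (auto simp: rme_init_def pending_def vle_def)
  qed
  then show ?thesis
    unfolding rme_inv_def inv_labels_def inv_sets_def inv_frontier_def inv_solutions_def inv_mode_def
      inv_tracking_def
    using vs_in_V by (auto simp: rme_init_def vadd_def label_path_root)
qed

lemma expanded_label_tracks:
  assumes IS: "inv_sets s" and IT: "inv_tracking s" and p: "dest_path p" and k: "k < length p"
    and a: "a \<in> hist s" "lv (store s a) = p ! k"
  shows "Suc k < length p"
    "pending s a k p \<or> tracked s p (Suc k) (vadd (lg (store s a)) (c (p ! k) (p ! Suc k)))"
proof -
  show k': "Suc k < length p" using a inv_sets_not_dest[OF IS] dest_path_Suc[OF p k] by auto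
  show "pending s a k p \<or> tracked s p (Suc k) (vadd (lg (store s a)) (c (p ! k) (p ! Suc k)))"
    using IT a(1) p k' a(2)[symmetric] unfolding inv_tracking_def by blast
qed

lemma tracked_at_expanded:
  assumes IS: "inv_sets s" and IT: "inv_tracking s" and p: "dest_path p" and k: "k < length p"
    and a: "a \<in> hist s" "lv (store s a) = p ! k" and b: "vle M (lg (store s a)) b"
  shows "tracked s p k b"
  using expanded_label_tracks(2)[OF IS IT p k a]
proof
  assume "pending s a k p"
  then show ?thesis using tracked_at_label k a(2) b by simp
next
  assume "tracked s p (Suc k) (vadd (lg (store s a)) (c (p ! k) (p ! Suc k)))"
  moreover have "vle M (vadd (lg (store s a)) (c (p ! k) (p ! Suc k))) (vadd b (seg_cost c p k (Suc k)))"
    using b unfolding vle_def vadd_def seg_cost_single by auto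
  ultimately show ?thesis using tracked_prefix expanded_label_tracks(1)[OF IS IT p k a] by simp
qed

lemma inv_tracking_transfer:
  assumes T: "inv_tracking s"
    and cov: "\<And>T. covered s T \<Longrightarrow> covered s' T"
    and kept: "\<And>p l j. dest_path p \<Longrightarrow> j < length p \<Longrightarrow> lv (store s l) = p ! j \<Longrightarrow> pending s l j p \<Longrightarrow>
                 tracking_kept s s' p l j"
    and new: "\<And>l. l \<in> hist s' \<Longrightarrow>
                (l \<in> hist s \<and> lv (store s' l) = lv (store s l) \<and> lg (store s' l) = lg (store s l)) \<or>
                (\<forall>p i. dest_path p \<longrightarrow> Suc i < length p \<longrightarrow> p ! i = lv (store s' l) \<longrightarrow> pending s' l i p)"
  shows "inv_tracking s'"
proof -
  have transfer: "tracked s' p k b" if "dest_path p" "tracked s p k b" for p k b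
    using tracked_transfer[OF cov kept[OF that(1)] that(2)] .
  have start: "tracked s' q 0 (\<lambda>_. 0)" if q: "st_path E vs vd q" for q
  proof -
    have "dest_path q" using q unfolding st_path_def dest_path_def by simp
    moreover have "tracked s q 0 (\<lambda>_. 0)" using T q unfolding inv_tracking_def by simp
    ultimately show ?thesis by (rule transfer)
  qed
  have expanded: "pending s' l i p \<or> tracked s' p (Suc i) (vadd (lg (store s' l)) (c (p ! i) (p ! Suc i)))"
    if l: "l \<in> hist s'" and p: "dest_path p" and i: "Suc i < length p" and pl: "p ! i = lv (store s' l)"
    for l p i
  proof (cases "l \<in> hist s \<and> lv (store s' l) = lv (store s l) \<and> lg (store s' l) = lg (store s l)")
    case False
    then have "\<forall>p i. dest_path p \<longrightarrow> Suc i < length p \<longrightarrow> p ! i = lv (store s' l) \<longrightarrow> pending s' l i p"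
      using new[OF l] by blast
    then show ?thesis using p i pl by simp
  next
    case True
    let ?b = "vadd (lg (store s l)) (c (p ! i) (p ! Suc i))"
    have "pending s l i p \<or> tracked s p (Suc i) ?b"
      using T True p i pl unfolding inv_tracking_def by simp
    then have "pending s' l i p \<or> tracked s' p (Suc i) ?b"
    proof
      assume "pending s l i p"
      then have "tracking_kept s s' p l i" using kept p i pl True by simp
      then show ?thesis unfolding tracking_kept_def
      proof (elim disjE exE conjE)
        assume "covered s' (vadd (lg (store s l)) (seg_cost c p i (length p - 1)))"
        then show ?thesis using tracked_Suc_of_covered i by blast
      next
        fix j' b'
        assume "i < j'" "j' < length p" "vle M b' (vadd (lg (store s l)) (seg_cost c p i j'))"
          "tracked s p j' b'"
        then show ?thesis using tracked_Suc_of_later transfer[OF p] by blast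
      next
        fix j' b'
        assume "i < j'" "j' < length p" "vle M b' (vadd (lg (store s l)) (seg_cost c p i j'))"
          "tracked s' p j' b'"
        then show ?thesis using tracked_Suc_of_later by blast
      qed (use True in simp_all)
    qed (use transfer[OF p] in simp)
    then show ?thesis using True by simp
  qed
  show ?thesis unfolding inv_tracking_def using start expanded by blast
qed

section \<open>Preservation of the invariant\<close>

lemma pending_Main: "mode s = Main \<Longrightarrow> pending s l j p \<longleftrightarrow>
    l \<in> opn s \<and> (l \<in> hist s \<longrightarrow> Suc j < length p \<and> lex_le M (lr (store s l)) (child_f (store s) l (p ! Suc j)))"
  unfolding pending_def by simp

lemma rme_inv_main_done:
  assumes I: "rme_inv s" and "mode s = Main" and "opn s = {}"
  shows "rme_inv (s\<lparr>mode := Done\<rparr>)"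
proof -
  have "inv_tracking (s\<lparr>mode := Done\<rparr>)"
  proof (rule inv_tracking_transfer)
    show "inv_tracking s" using I by (simp add: rme_inv_def)
    show "covered s T \<Longrightarrow> covered (s\<lparr>mode := Done\<rparr>) T" for T by (simp add: covered_def)
    show "tracking_kept s (s\<lparr>mode := Done\<rparr>) p l j" if "pending s l j p" for p l j
      using that assms by (simp add: pending_Main)
  qed simp
  then show ?thesis using rme_inv_frame[OF I] assms by (simp add: inv_mode_def)
qed

text \<open>A label discarded by the solution check is dominated, together with every continuation, by
  a solution; one discarded by the frontier check is replaced by the dominating expanded label.\<close>
lemma tracking_kept_discarded:
  assumes I: "rme_inv s" and m: "mode s = Main" and chk: "frontier_check M s l \<or> sol_check M s l"
    and p: "dest_path p" and jl: "j < length p" and pj: "lv (store s l) = p ! j" and lo: "l \<in> opn s"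
  shows "tracking_kept s (s\<lparr>opn := opn s - {l}\<rparr>) p l j"
proof -
  let ?s = "s\<lparr>opn := opn s - {l}\<rparr>"
  have IL: "inv_labels s" and IS: "inv_sets s" and IF: "inv_frontier s" and IT: "inv_tracking s"
    using I unfolding rme_inv_def by auto
  from chk show ?thesis
  proof
    assume "sol_check M s l"
    then obtain x where x: "x \<in> sol s" "vle M (lg (store s x)) (lf (store s l))"
      unfolding sol_check_def by blast
    have "vle M (lf (store s l)) (vadd (lg (store s l)) (seg_cost c p j (length p - 1)))"
      using inv_labels_f[OF IL inv_sets_fresh(1)[OF IS lo]] f_le_remaining_cost[OF p jl] pj by simp
    then have "covered ?s (vadd (lg (store s l)) (seg_cost c p j (length p - 1)))"
      using x(1) vle_trans[OF x(2)] unfolding covered_def by auto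
    then show ?thesis unfolding tracking_kept_def by simp
  next
    assume "frontier_check M s l"
    then obtain l3 where nh: "l \<notin> hist s" and l3: "l3 \<in> alpha s (lv (store s l))"
      "vle M (lg (store s l3)) (lg (store s l))"
      unfolding frontier_check_def by blast
    have h3: "l3 \<in> hist s" "lv (store s l3) = p ! j" using inv_frontier_alpha[OF IF l3(1)] pj by auto
    note tracks = expanded_label_tracks[OF IS IT p jl h3]
    from tracks(2) show ?thesis
    proof
      assume "pending s l3 j p"
      moreover have "l3 \<noteq> l" using nh h3 by auto
      ultimately have "pending ?s l3 j p" using m unfolding pending_def by simp
      then have "tracked ?s p j (lg (store s l))" using tracked_at_label jl h3 l3(2) by simp
      then show ?thesis unfolding tracking_kept_def using nh by simp
    next
      assume "tracked s p (Suc j) (vadd (lg (store s l3)) (c (p ! j) (p ! Suc j)))"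
      moreover have "vle M (vadd (lg (store s l3)) (c (p ! j) (p ! Suc j)))
          (vadd (lg (store s l)) (seg_cost c p j (Suc j)))"
        using l3(2) unfolding vle_def vadd_def seg_cost_single by auto
      ultimately show ?thesis unfolding tracking_kept_def using tracks(1) by blast
    qed
  qed
qed

lemma inv_tracking_main_discard:
  assumes I: "rme_inv s" and m: "mode s = Main" and lo: "l \<in> opn s"
    and chk: "frontier_check M s l \<or> sol_check M s l"
  shows "inv_tracking (s\<lparr>opn := opn s - {l}\<rparr>)"
proof (rule inv_tracking_transfer)
  show "inv_tracking s" using I by (simp add: rme_inv_def)
  show "covered s T \<Longrightarrow> covered (s\<lparr>opn := opn s - {l}\<rparr>) T" for T unfolding covered_def by simp
next
  fix p l2 j
  assume p: "dest_path p" and jl: "j < length p" and pj: "lv (store s l2) = p ! j" and act: "pending s l2 j p"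
  show "tracking_kept s (s\<lparr>opn := opn s - {l}\<rparr>) p l2 j"
  proof (cases "l2 = l")
    case False
    then show ?thesis using act m unfolding tracking_kept_def pending_def by simp
  next
    case True
    then show ?thesis using tracking_kept_discarded[OF I m chk p jl _ lo] pj by simp
  qed
qed simp

lemma rme_inv_main_discard:
  assumes I: "rme_inv s" and "mode s = Main" and "l \<in> opn s"
    and "frontier_check M s l \<or> sol_check M s l"
  shows "rme_inv (s\<lparr>opn := opn s - {l}\<rparr>)"
  using rme_inv_frame[OF I] inv_tracking_main_discard[OF assms] assms(2) by (auto simp: inv_mode_def)

lemma covered_update_sol:
  assumes "covered s T" "sol s' = update_sol M s l" "store s' = store s"
  shows "covered s' T"
proof -
  obtain x where x: "x \<in> sol s" "vle M (lg (store s x)) T" using assms(1) unfolding covered_def by blast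
  show ?thesis
  proof (cases "vdom M (lg (store s l)) (lg (store s x))")
    case True
    then have "vle M (lg (store s l)) T" using x(2) vdom_imp_vle vle_trans by blast
    then show ?thesis using assms(2,3) unfolding covered_def update_sol_def by auto
  next
    case False
    then show ?thesis using x assms(2,3) unfolding covered_def update_sol_def by auto
  qed
qed

lemma inv_solutions_update_sol:
  assumes IL: "inv_labels s" and IO: "inv_solutions s" and lf: "l < fresh s"
    and ld: "lv (store s l) = vd" and ns: "\<not> sol_check M s l"
    and s': "store s' = store s" "sol s' = update_sol M s l"
  shows "inv_solutions s'"
proof -
  have f_eq_g: "vle M a (lf (store s l)) \<longleftrightarrow> vle M a (lg (store s l))" for a
    using inv_labels_f[OF IL lf] ld h_dest unfolding vle_def vadd_def by auto
  have not_below: "\<not> vle M (lg (store s x)) (lg (store s l))" if "x \<in> sol s" for x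
    using ns that f_eq_g unfolding sol_check_def by blast
  have "\<not> vle M (lg (store s x)) (lg (store s y))"
    if "x \<in> update_sol M s l" "y \<in> update_sol M s l" "x \<noteq> y" for x y
  proof (cases "x = l")
    case True
    then have "y \<in> sol s" "\<not> vdom M (lg (store s l)) (lg (store s y))"
      using that unfolding update_sol_def by auto
    then show ?thesis using True not_below unfolding vdom_def vle_def veq_def by force
  next
    case False
    then have "x \<in> sol s" using that(1) unfolding update_sol_def by auto
    moreover have "y = l \<or> y \<in> sol s" using that(2) unfolding update_sol_def by auto
    ultimately show ?thesis using not_below inv_solutions_antichain[OF IO] that(3) by blast
  qed
  moreover have "lv (store s x) = vd" if "x \<in> update_sol M s l" for x
    using that IO ld unfolding inv_solutions_def update_sol_def by auto
  ultimately show ?thesis unfolding inv_solutions_def s' by blast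
qed

lemma inv_tracking_main_goal:
  assumes I: "rme_inv s" and m: "mode s = Main" and lo: "l \<in> opn s"
  shows "inv_tracking (s\<lparr>opn := opn s - {l}, sol := update_sol M s l\<rparr>)"
proof -
  let ?s = "s\<lparr>opn := opn s - {l}, sol := update_sol M s l\<rparr>"
  show ?thesis
  proof (rule inv_tracking_transfer)
    show "inv_tracking s" using I by (simp add: rme_inv_def)
    show "covered s T \<Longrightarrow> covered ?s T" for T by (rule covered_update_sol) auto
  next
    fix p l2 j
    assume p: "dest_path p" and jl: "j < length p" and act: "pending s l2 j p"
    show "tracking_kept s ?s p l2 j"
    proof (cases "l2 = l")
      case False
      then show ?thesis using act m unfolding tracking_kept_def pending_def by simp
    next
      case True
      have "l \<in> sol ?s" unfolding update_sol_def by simp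
      moreover have "vle M (lg (store s l)) (vadd (lg (store s l)) (seg_cost c p j (length p - 1)))"
        using seg_cost_nonneg[OF p, of "length p - 1"] jl unfolding vle_def vadd_def by auto
      ultimately have "covered ?s (vadd (lg (store s l)) (seg_cost c p j (length p - 1)))"
        unfolding covered_def by auto
      then show ?thesis unfolding tracking_kept_def True by simp
    qed
  qed simp
qed

lemma rme_inv_main_goal:
  assumes I: "rme_inv s" and m: "mode s = Main" and lo: "l \<in> opn s"
    and ns: "\<not> sol_check M s l" and ld: "lv (store s l) = vd"
  shows "rme_inv (s\<lparr>opn := opn s - {l}, sol := update_sol M s l\<rparr>)"
proof -
  let ?s = "s\<lparr>opn := opn s - {l}, sol := update_sol M s l\<rparr>"
  have IL: "inv_labels s" and IS: "inv_sets s" and IO: "inv_solutions s"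
    using I unfolding rme_inv_def by auto
  have lf: "l < fresh s" using inv_sets_fresh(1)[OF IS lo] .
  have "inv_sets ?s" using IS lf unfolding inv_sets_def update_sol_def by auto
  moreover have "inv_solutions ?s" by (rule inv_solutions_update_sol[OF IL IO lf ld ns]) simp_all
  moreover have "inv_labels ?s" "inv_frontier ?s"
    using I inv_labels_cong[of ?s s] inv_frontier_cong[of ?s s] unfolding rme_inv_def by simp_all
  ultimately show ?thesis
    using inv_tracking_main_goal[OF I m lo] m unfolding rme_inv_def inv_mode_def by simp
qed

lemma update_frontier_fields:
  "store (update_frontier M s l) = store s" "fresh (update_frontier M s l) = fresh s"
  "opn (update_frontier M s l) = opn s" "sol (update_frontier M s l) = sol s"
  "hist (update_frontier M s l) = insert l (hist s)"
  unfolding update_frontier_def Let_def by auto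

lemma update_frontier_alpha:
  "l \<notin> hist s \<Longrightarrow> alpha (update_frontier M s l) = (alpha s)(lv (store s l) :=
     {l2 \<in> alpha s (lv (store s l)). \<not> vdom M (lg (store s l)) (lg (store s l2))} \<union> {l})"
  unfolding update_frontier_def Let_def by simp

lemma update_frontier_dominated:
  assumes IF: "inv_frontier s" and nh: "l \<notin> hist s" and a: "a \<in> insert l (hist s)"
  shows "\<exists>a'\<in>alpha (update_frontier M s l) (lv (store s a)). vle M (lg (store s a')) (lg (store s a))"
proof -
  let ?v = "lv (store s l)" and ?A = "alpha (update_frontier M s l)"
  have l_in: "l \<in> ?A ?v" using update_frontier_alpha[OF nh] by simp
  show ?thesis
  proof (cases "a = l")
    case True
    then show ?thesis using l_in vle_refl by blast
  next
    case False
    then obtain a' where a': "a' \<in> alpha s (lv (store s a))" "vle M (lg (store s a')) (lg (store s a))"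
      using a inv_frontier_dominated[OF IF] by blast
    consider "lv (store s a) \<noteq> ?v" | "lv (store s a) = ?v" "vdom M (lg (store s l)) (lg (store s a'))"
      | "lv (store s a) = ?v" "\<not> vdom M (lg (store s l)) (lg (store s a'))" by blast
    then show ?thesis
    proof cases
      case 2
      then show ?thesis using l_in a'(2) vdom_imp_vle vle_trans by metis
    qed (use a' update_frontier_alpha[OF nh] in auto)
  qed
qed

lemma not_frontier_check_new_cost:
  assumes IF: "inv_frontier s" and nf: "\<not> frontier_check M s l" and nh: "l \<notin> hist s"
    and b: "b \<in> hist s" "lv (store s b) = lv (store s l)"
  shows "\<not> veq M (lg (store s l)) (lg (store s b))"
proof
  assume eq: "veq M (lg (store s l)) (lg (store s b))"
  obtain b' where "b' \<in> alpha s (lv (store s l))" "vle M (lg (store s b')) (lg (store s b))"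
    using inv_frontier_dominated[OF IF b(1)] b(2) by auto
  then show False using nf nh eq unfolding frontier_check_def vle_def veq_def by auto
qed

lemma inv_frontier_update_frontier:
  assumes IF: "inv_frontier s" and nf: "\<not> frontier_check M s l"
  shows "inv_frontier (update_frontier M s l)"
proof (cases "l \<in> hist s")
  case True
  then show ?thesis using IF unfolding inv_frontier_def update_frontier_def by (simp add: insert_absorb)
next
  case nh: False
  have "\<forall>u. \<forall>l0\<in>alpha (update_frontier M s l) u. l0 \<in> insert l (hist s) \<and> lv (store s l0) = u"
    using IF update_frontier_alpha[OF nh] unfolding inv_frontier_def by auto
  moreover have "\<not> veq M (lg (store s a)) (lg (store s b))"
    if ab: "a \<in> insert l (hist s)" "b \<in> insert l (hist s)" "a \<noteq> b" "lv (store s a) = lv (store s b)" for a b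
  proof -
    consider "a \<in> hist s" "b \<in> hist s" | "a = l" "b \<in> hist s" | "b = l" "a \<in> hist s"
      using ab by auto
    then show ?thesis
    proof cases
      case 1
      then show ?thesis using IF ab(3,4) unfolding inv_frontier_def by blast
    next
      case 2
      then show ?thesis using not_frontier_check_new_cost[OF IF nf nh] ab(4) by simp
    next
      case 3
      then show ?thesis using not_frontier_check_new_cost[OF IF nf nh, of a] ab(4) veq_sym by metis
    qed
  qed
  ultimately show ?thesis
    using update_frontier_dominated[OF IF nh] unfolding inv_frontier_def by (simp add: update_frontier_fields)
qed

lemma inv_tracking_main_exp:
  assumes I: "rme_inv s" and m: "mode s = Main" and lo: "l \<in> opn s" and ld: "lv (store s l) \<noteq> vd"
    and xs: "set xs = succs (lv (store s l))"
  shows "inv_tracking ((update_frontier M (s\<lparr>opn := opn s - {l}\<rparr>) l)\<lparr>mode := Exp l xs None\<rparr>)"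
proof -
  let ?s = "(update_frontier M (s\<lparr>opn := opn s - {l}\<rparr>) l)\<lparr>mode := Exp l xs None\<rparr>"
  have F: "store ?s = store s" "opn ?s = opn s - {l}" "hist ?s = insert l (hist s)" "sol ?s = sol s"
    "mode ?s = Exp l xs None"
    by (simp_all add: update_frontier_fields)
  have IL: "inv_labels s" and IS: "inv_sets s" using I unfolding rme_inv_def by auto
  have lf: "l < fresh s" using inv_sets_fresh(1)[OF IS lo] .
  text \<open>When \<open>l\<close> is expanded, every successor on a path through \<open>l\<close> becomes pending, since
    \<open>lr\<close> is \<open>f\<close> of \<open>l\<close> for a first expansion and otherwise was kept below the successors' \<open>f\<close>.\<close>
  have now_pending: "pending ?s l i p"
    if p: "dest_path p" and i: "Suc i < length p" and pl: "p ! i = lv (store s l)"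
      and key: "l \<in> hist s \<longrightarrow> lex_le M (lr (store s l)) (child_f (store s) l (p ! Suc i))" for p i
  proof -
    have e: "(lv (store s l), p ! Suc i) \<in> E" using dest_path_edge[OF p i] pl by simp
    have "lex_le M (lr (store s l)) (child_f (store s) l (p ! Suc i))"
    proof (cases "l \<in> hist s")
      case False
      then show ?thesis using inv_labels_r[OF IL lf] vle_imp_lex_le[OF f_le_child_f[of "store s" l, OF e]] by simp
    qed (use key in simp)
    then show ?thesis unfolding pending_def F using i e xs unfolding succs_def by auto
  qed
  show ?thesis
  proof (rule inv_tracking_transfer)
    show "inv_tracking s" using I by (simp add: rme_inv_def)
    show "covered s T \<Longrightarrow> covered ?s T" for T unfolding covered_def F by simp
  next
    fix p l2 j
    assume p: "dest_path p" and jl: "j < length p" and pj: "lv (store s l2) = p ! j" and act: "pending s l2 j p"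
    show "tracking_kept s ?s p l2 j"
    proof (cases "l2 = l")
      case False
      then have "pending ?s l2 j p" using act m unfolding pending_def F by auto
      then show ?thesis unfolding tracking_kept_def F by simp
    next
      case True
      have key: "l \<in> hist s \<longrightarrow> Suc j < length p \<and> lex_le M (lr (store s l)) (child_f (store s) l (p ! Suc j))"
        using act m True unfolding pending_def by auto
      have "Suc j < length p"
        using key dest_path_Suc[OF p jl] ld pj True by blast
      then have "pending ?s l j p" using now_pending[OF p] key pj True by simp
      then show ?thesis unfolding tracking_kept_def F True by simp
    qed
  next
    fix l0
    assume "l0 \<in> hist ?s"
    then show "(l0 \<in> hist s \<and> lv (store ?s l0) = lv (store s l0) \<and> lg (store ?s l0) = lg (store s l0)) \<or>
          (\<forall>p i. dest_path p \<longrightarrow> Suc i < length p \<longrightarrow> p ! i = lv (store ?s l0) \<longrightarrow> pending ?s l0 i p)"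
      using now_pending unfolding F by auto
  qed
qed

lemma rme_inv_main_exp:
  assumes I: "rme_inv s" and m: "mode s = Main" and lo: "l \<in> opn s"
    and nf: "\<not> frontier_check M s l" and ld: "lv (store s l) \<noteq> vd"
    and xs: "set xs = succs (lv (store s l))"
  shows "rme_inv ((update_frontier M (s\<lparr>opn := opn s - {l}\<rparr>) l)\<lparr>mode := Exp l xs None\<rparr>)"
proof -
  let ?t = "s\<lparr>opn := opn s - {l}\<rparr>"
  let ?s = "(update_frontier M ?t l)\<lparr>mode := Exp l xs None\<rparr>"
  have F: "store ?s = store s" "fresh ?s = fresh s" "opn ?s = opn s - {l}" "hist ?s = insert l (hist s)"
    "sol ?s = sol s" "mode ?s = Exp l xs None"
    by (simp_all add: update_frontier_fields)
  have IL: "inv_labels s" and IS: "inv_sets s" and IF: "inv_frontier s" and IO: "inv_solutions s"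
    using I unfolding rme_inv_def by auto
  have "inv_labels ?s" using IL unfolding inv_labels_def F by auto
  moreover have "inv_sets ?s"
  proof -
    have "opn ?s \<union> hist ?s = opn s \<union> hist s" using lo F by auto
    then show ?thesis using IS ld unfolding inv_sets_def F by auto
  qed
  moreover have "inv_frontier ?s"
  proof -
    have "inv_frontier ?t" using IF unfolding inv_frontier_def by simp
    moreover have "\<not> frontier_check M ?t l" using nf unfolding frontier_check_def by simp
    ultimately have "inv_frontier (update_frontier M ?t l)" by (rule inv_frontier_update_frontier)
    then show ?thesis unfolding inv_frontier_def by simp
  qed
  moreover have "inv_solutions ?s" using IO inv_solutions_cong[of ?s s] F by simp
  moreover have "inv_mode ?s" unfolding inv_mode_def F using xs by auto
  ultimately show ?thesis using inv_tracking_main_exp[OF I m lo ld xs] unfolding rme_inv_def by simp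
qed

lemma rme_inv_exp_end_inf:
  assumes I: "rme_inv s" and m: "mode s = Exp l [] None"
  shows "rme_inv (s\<lparr>mode := Main\<rparr>)"
proof -
  have "inv_tracking (s\<lparr>mode := Main\<rparr>)"
  proof (rule inv_tracking_transfer)
    show "inv_tracking s" using I by (simp add: rme_inv_def)
    show "covered s T \<Longrightarrow> covered (s\<lparr>mode := Main\<rparr>) T" for T by (simp add: covered_def)
    show "tracking_kept s (s\<lparr>mode := Main\<rparr>) p l2 j" if "pending s l2 j p" for p l2 j
      using that m unfolding tracking_kept_def pending_def by simp
  qed simp
  then show ?thesis using rme_inv_frame[OF I] by (simp add: inv_mode_def)
qed

lemma rme_inv_exp_end_reinsert:
  assumes I: "rme_inv s" and m: "mode s = Exp l [] (Some r)"
  shows "rme_inv (s\<lparr>store := (store s)(l := (store s l)\<lparr>lr := r\<rparr>), opn := insert l (opn s), mode := Main\<rparr>)"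
    (is "rme_inv ?s")
proof -
  have IL: "inv_labels s" and IS: "inv_sets s" and IF: "inv_frontier s" and IO: "inv_solutions s"
    and lh: "l \<in> hist s" and lo: "l \<notin> opn s"
    using I m unfolding rme_inv_def inv_mode_def by auto
  have same: "lv (store ?s i) = lv (store s i)" "lg (store ?s i) = lg (store s i)" "lf (store ?s i) = lf (store s i)"
    "lpar (store ?s i) = lpar (store s i)" for i by auto
  have child_f_same: "child_f (store ?s) i = child_f (store s) i" for i
    unfolding child_f_def same by simp
  have "inv_labels ?s"
    using IL lh unfolding inv_labels_def same by auto
  moreover have "inv_sets ?s"
  proof -
    have "label_path (store ?s) i = label_path (store s) i" for i by (rule label_path_cong) (simp only: same)
    moreover have "opn ?s \<union> hist ?s = opn s \<union> hist s" using lh by auto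
    ultimately show ?thesis using IS inv_sets_fresh(2)[OF IS lh] unfolding inv_sets_def same by simp
  qed
  moreover have "inv_frontier ?s" "inv_solutions ?s"
    using IF IO unfolding inv_frontier_def inv_solutions_def same by simp_all
  moreover have "inv_tracking ?s"
  proof (rule inv_tracking_transfer)
    show "inv_tracking s" using I by (simp add: rme_inv_def)
    show "covered s T \<Longrightarrow> covered ?s T" for T unfolding covered_def same by simp
  next
    fix p l2 j
    assume "pending s l2 j p"
    then have "pending ?s l2 j p"
      using m lo lh unfolding pending_def child_f_same by (auto split: if_splits)
    then show "tracking_kept s ?s p l2 j" unfolding tracking_kept_def same by simp
  qed (simp add: same)
  ultimately show ?thesis unfolding rme_inv_def inv_mode_def by simp
qed

lemma inv_labels_add_child:
  assumes IL: "inv_labels s" and lf: "l < fresh s" and e: "(lv (store s l), v') \<in> E"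
    and st: "store s' = (store s)(fresh s := child c h s l v')" and fr: "fresh s' = Suc (fresh s)"
    and hi: "hist s' = hist s"
  shows "inv_labels s'"
proof -
  let ?x = "child c h s l v'"
  have old: "store s' i = store s i" if "i < fresh s" for i using that st by simp
  have "0 < fresh s" using IL unfolding inv_labels_def by simp
  then have root: "lv (store s' 0) = vs \<and> lg (store s' 0) = (\<lambda>_. 0) \<and> lpar (store s' 0) = None"
    using IL old unfolding inv_labels_def by simp
  have parent: "\<exists>p. lpar (store s' i) = Some p \<and> p < i \<and> (lv (store s' p), lv (store s' i)) \<in> E \<and>
        lg (store s' i) = vadd (lg (store s' p)) (c (lv (store s' p)) (lv (store s' i)))"
    if "0 < i" "i < fresh s'" for i
  proof (cases "i = fresh s")
    case True
    then show ?thesis using st old[OF lf] lf e child_simps[of s l v'] by (intro exI[of _ l]) auto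
  next
    case False
    then have i: "i < fresh s" using that fr by simp
    with IL that(1) obtain p where "lpar (store s i) = Some p" "p < i" "(lv (store s p), lv (store s i)) \<in> E"
      "lg (store s i) = vadd (lg (store s p)) (c (lv (store s p)) (lv (store s i)))"
      by (elim inv_labels_parent) auto
    then show ?thesis using old[OF i] old[of p] i by (intro exI[of _ p]) auto
  qed
  have "lv ?x \<in> V" using e E_subset child_simps(1) by auto
  then have data: "lf (store s' i) = vadd (lg (store s' i)) (h (lv (store s' i))) \<and> lv (store s' i) \<in> V \<and>
      (i \<notin> hist s' \<longrightarrow> lr (store s' i) = lf (store s' i))" if "i < fresh s'" for i
    using that IL old[of i] st fr hi unfolding inv_labels_def less_Suc_eq
    by (auto simp: vadd_def child_simps child_f_def)
  show ?thesis using root parent data fr unfolding inv_labels_def by simp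
qed

lemma inv_frontier_extend:
  assumes IF: "inv_frontier s" and IS: "inv_sets s"
    and st: "\<forall>i<fresh s. store s' i = store s i" and "hist s' = hist s" and "alpha s' = alpha s"
  shows "inv_frontier s'"
proof -
  have "\<forall>i\<in>hist s. store s' i = store s i" using st inv_sets_fresh(2)[OF IS] by blast
  then show ?thesis using IF assms(4,5) unfolding inv_frontier_def by (simp (no_asm_simp))
qed

lemma inv_solutions_extend:
  assumes IO: "inv_solutions s" and IS: "inv_sets s"
    and st: "\<forall>i<fresh s. store s' i = store s i" and "sol s' = sol s"
  shows "inv_solutions s'"
proof -
  have "\<forall>i\<in>sol s. store s' i = store s i" using st inv_sets_fresh(3)[OF IS] by blast
  then show ?thesis using IO assms(4) unfolding inv_solutions_def by (simp (no_asm_simp))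
qed

lemma frontier_check_child:
  assumes IS: "inv_sets s" and IF: "inv_frontier s"
    and st: "store s' = (store s)(fresh s := child c h s l v')" and hi: "hist s' = hist s"
    and al: "alpha s' = alpha s"
  shows "frontier_check M s' (fresh s) \<longleftrightarrow>
    (\<exists>l3\<in>alpha s v'. vle M (lg (store s l3)) (lg (child c h s l v')))"
proof -
  have "fresh s \<notin> hist s" using inv_sets_fresh(2)[OF IS] by blast
  then have "frontier_check M s' (fresh s) \<longleftrightarrow>
      (\<exists>l3\<in>alpha s v'. vle M (lg (store s' l3)) (lg (child c h s l v')))"
    unfolding frontier_check_def using hi al by (simp add: st child_simps)
  also have "\<dots> \<longleftrightarrow> (\<exists>l3\<in>alpha s v'. vle M (lg (store s l3)) (lg (child c h s l v')))"
  proof (rule bex_cong)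
    fix l3
    assume "l3 \<in> alpha s v'"
    then have "l3 < fresh s" using inv_frontier_alpha[OF IF] inv_sets_fresh(2)[OF IS] by blast
    then show "vle M (lg (store s' l3)) (lg (child c h s l v')) \<longleftrightarrow>
        vle M (lg (store s l3)) (lg (child c h s l v'))" by (simp add: st)
  qed simp
  finally show ?thesis .
qed

lemma sol_check_child:
  assumes IS: "inv_sets s" and st: "store s' = (store s)(fresh s := child c h s l v')" and so: "sol s' = sol s"
  shows "sol_check M s' (fresh s) \<longleftrightarrow> (\<exists>y\<in>sol s. vle M (lg (store s y)) (lf (child c h s l v')))"
  unfolding sol_check_def
proof (rule bex_cong)
  fix y
  assume "y \<in> sol s"
  then have "y < fresh s" using inv_sets_fresh(3)[OF IS] by blast
  then show "vle M (lg (store s' y)) (lf (store s' (fresh s))) \<longleftrightarrow>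
      vle M (lg (store s y)) (lf (child c h s l v'))" by (simp add: st)
qed (rule so)

text \<open>A repeated vertex \<open>v'\<close> would carry an expanded label no more expensive than \<open>l\<close>, hence
  than the child, and the frontier of \<open>v'\<close> would prune the child.\<close>
lemma unpruned_child_not_on_path:
  assumes IL: "inv_labels s" and IS: "inv_sets s" and IF: "inv_frontier s"
    and lh: "l \<in> hist s" and e: "(lv (store s l), v') \<in> E"
    and st: "store s' = (store s)(fresh s := child c h s l v')" and hi: "hist s' = hist s"
    and al: "alpha s' = alpha s" and nfr: "\<not> frontier_check M s' (fresh s)"
  shows "v' \<notin> set (label_path (store s) l)"
proof
  assume "v' \<in> set (label_path (store s) l)"
  then obtain b where b: "b \<in> hist s" "lv (store s b) = v'" "vle M (lg (store s b)) (lg (store s l))"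
    using ancestor_dominated[OF IL IS lh] by blast
  obtain b' where b': "b' \<in> alpha s v'" "vle M (lg (store s b')) (lg (store s b))"
    using inv_frontier_dominated[OF IF b(1)] b(2) by blast
  have "vle M (lg (store s l)) (lg (child c h s l v'))"
    using cost_nonneg[OF e] unfolding child_simps vle_def vadd_def by auto
  then have "vle M (lg (store s b')) (lg (child c h s l v'))" using b(3) b'(2) vle_trans by blast
  then show False using nfr b'(1) frontier_check_child[OF IS IF st hi al] by blast
qed

lemma inv_sets_add_child:
  assumes IL: "inv_labels s" and IS: "inv_sets s" and IF: "inv_frontier s"
    and lh: "l \<in> hist s" and e: "(lv (store s l), v') \<in> E"
    and st: "store s' = (store s)(fresh s := child c h s l v')" and fr: "fresh s' = Suc (fresh s)"
    and hi: "hist s' = hist s" and al: "alpha s' = alpha s" and so: "sol s' = sol s"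
    and op: "opn s' \<subseteq> insert (fresh s) (opn s)"
    and unpruned: "fresh s \<in> opn s' \<Longrightarrow> \<not> frontier_check M s' (fresh s)"
  shows "inv_sets s'"
proof -
  let ?F = "fresh s" and ?x = "child c h s l v'"
  have old: "store s' i = store s i" if "i < ?F" for i using that st by simp
  have lF: "l < ?F" using inv_sets_fresh(2)[OF IS lh] .
  have old_path: "label_path (store s') i = label_path (store s) i" if "i < ?F" for i
    by (rule label_path_cong) (use that old in auto)
  have new_path: "label_path (store s') ?F = label_path (store s) l @ [v']"
    using label_path_parent[of "store s'" ?F l] st lF old_path[OF lF] by (simp add: child_simps)
  have range: "opn s' \<union> hist s' \<union> sol s' \<subseteq> {..<fresh s'}"
    using IS op fr hi so unfolding inv_sets_def by auto
  have not_dest: "\<forall>i\<in>hist s'. lv (store s' i) \<noteq> vd"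
    using inv_sets_not_dest[OF IS] inv_sets_fresh(2)[OF IS] old hi by auto
  have parents: "\<forall>i\<in>opn s' \<union> hist s'. \<forall>p. lpar (store s' i) = Some p \<longrightarrow> p \<in> hist s'"
  proof (intro ballI allI impI)
    fix i p
    assume i: "i \<in> opn s' \<union> hist s'" and p: "lpar (store s' i) = Some p"
    show "p \<in> hist s'"
    proof (cases "i = ?F")
      case True
      then show ?thesis using p st lh hi by (simp add: child_simps)
    next
      case False
      then have "i \<in> opn s \<union> hist s" "i < ?F" using i op hi inv_sets_fresh[OF IS] by auto
      then show ?thesis using IS p old hi unfolding inv_sets_def by auto
    qed
  qed
  have simple: "distinct (label_path (store s') i)" if i: "i \<in> opn s' \<union> hist s'" for i
  proof (cases "i = ?F")
    case False
    then have "i \<in> opn s \<union> hist s" "i < ?F" using i op hi inv_sets_fresh[OF IS] by auto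
    then show ?thesis using IS old_path unfolding inv_sets_def by auto
  next
    case True
    then have "\<not> frontier_check M s' ?F" using i unpruned hi inv_sets_fresh(2)[OF IS] by auto
    then have "v' \<notin> set (label_path (store s) l)"
      using unpruned_child_not_on_path[OF IL IS IF lh e st hi al] by blast
    then show ?thesis using True new_path IS lh unfolding inv_sets_def by auto
  qed
  show ?thesis unfolding inv_sets_def using range not_dest parents simple by blast
qed

lemma inv_mode_exp_child:
  assumes IM: "inv_mode s" and m: "mode s = Exp l (v' # todo) rn" and lF: "l < fresh s"
    and old: "\<forall>i<fresh s. store s' i = store s i" and hi: "hist s' = hist s"
    and op: "opn s' \<subseteq> insert (fresh s) (opn s)" and m': "mode s' = Exp l todo R"
    and R: "R = rn \<or> (R = Some (lexmin M rn (child_f (store s) l v')) \<and>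
                       lex_less M (vadd (lr (store s l)) C) (child_f (store s) l v'))"
  shows "inv_mode s'"
proof -
  have l: "l \<in> hist s" "l \<notin> opn s" "set (v' # todo) \<subseteq> succs (lv (store s l))"
    and rn: "\<And>r. rn = Some r \<Longrightarrow>
      \<exists>u\<in>succs (lv (store s l)). r = child_f (store s) l u \<and> lex_less M (lr (store s l)) r"
    using IM m unfolding inv_mode_def by auto
  have sl: "store s' l = store s l" using old lF by simp
  then have cf: "child_f (store s') l = child_f (store s) l" unfolding child_f_def by (simp add: fun_eq_iff)
  have "\<exists>u\<in>succs (lv (store s l)). r = child_f (store s) l u \<and> lex_less M (lr (store s l)) r"
    if r: "R = Some r" for r
  proof (cases "R = rn")
    case True
    then show ?thesis using rn r by simp
  next
    case False
    then have R': "r = lexmin M rn (child_f (store s) l v')"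
      "lex_less M (vadd (lr (store s l)) C) (child_f (store s) l v')" using R r by auto
    then have "lex_less M (lr (store s l)) (child_f (store s) l v')" using lex_less_add_nonneg C_nonneg by blast
    then show ?thesis using lexmin_cases[of M rn "child_f (store s) l v'"] R'(1) rn l(3) by auto
  qed
  then show ?thesis using l op lF m' hi unfolding inv_mode_def by (auto simp: sl cf)
qed

lemma tracking_kept_pruned_child:
  assumes I: "rme_inv s"
    and st: "store s' = (store s)(fresh s := child c h s l v')" and hi: "hist s' = hist s"
    and al: "alpha s' = alpha s" and so: "sol s' = sol s"
    and p: "dest_path p" and j: "Suc j < length p" and pj: "p ! j = lv (store s l)" and pv: "p ! Suc j = v'"
    and pruned: "frontier_check M s' (fresh s) \<or> sol_check M s' (fresh s)"
  shows "tracking_kept s s' p l j"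
proof -
  let ?x = "child c h s l v'"
  have IS: "inv_sets s" and IF: "inv_frontier s" and IT: "inv_tracking s" using I unfolding rme_inv_def by auto
  have gx: "vle M (lg ?x) (vadd (lg (store s l)) (seg_cost c p j (Suc j)))"
    using pj pv unfolding child_simps seg_cost_single vle_def by simp
  from pruned show ?thesis
  proof
    assume "sol_check M s' (fresh s)"
    then obtain y where y: "y \<in> sol s" "vle M (lg (store s y)) (lf ?x)"
      using sol_check_child[OF IS st so] by blast
    have "lf ?x = vadd (lg ?x) (h (p ! Suc j))" using pv by (simp add: child_simps child_f_def)
    then have "vle M (lf ?x) (vadd (lg ?x) (seg_cost c p (Suc j) (length p - 1)))"
      using f_le_remaining_cost[OF p j] by simp
    also have "vle M \<dots> (vadd (lg (store s l)) (seg_cost c p j (length p - 1)))"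
      using vle_add_seg_cost[OF _ _ gx] j by simp
    finally have "vle M (lg (store s y)) (vadd (lg (store s l)) (seg_cost c p j (length p - 1)))"
      using y(2) vle_trans by blast
    moreover have "store s' y = store s y" using inv_sets_fresh(3)[OF IS y(1)] st by simp
    ultimately have "covered s' (vadd (lg (store s l)) (seg_cost c p j (length p - 1)))"
      unfolding covered_def using y(1) so by (intro bexI[of _ y]) simp_all
    then show ?thesis unfolding tracking_kept_def by simp
  next
    assume "frontier_check M s' (fresh s)"
    then obtain l3 where l3: "l3 \<in> alpha s v'" "vle M (lg (store s l3)) (lg ?x)"
      using frontier_check_child[OF IS IF st hi al] by blast
    have "l3 \<in> hist s" "lv (store s l3) = p ! Suc j" using inv_frontier_alpha[OF IF l3(1)] pv by auto
    then have "tracked s p (Suc j) (lg ?x)" using tracked_at_expanded[OF IS IT p j _ _ l3(2)] by blast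
    then show ?thesis unfolding tracking_kept_def using gx j by blast
  qed
qed

lemma tracking_kept_generated_child:
  assumes I: "rme_inv s" and m: "mode s = Exp l (v' # todo) rn"
    and st: "store s' = (store s)(fresh s := child c h s l v')" and hi: "hist s' = hist s"
    and al: "alpha s' = alpha s" and so: "sol s' = sol s" and m': "mode s' = Exp l todo R"
    and br: "(opn s' = opn s \<and> R = rn \<and> lex_less M (child_f (store s) l v') (lr (store s l))) \<or>
             (opn s' = opn s \<and> R = rn \<and> (frontier_check M s' (fresh s) \<or> sol_check M s' (fresh s))) \<or>
             (opn s' = opn s \<and> R = Some (lexmin M rn (child_f (store s) l v'))) \<or>
             (opn s' = insert (fresh s) (opn s) \<and> R = rn)"
    and p: "dest_path p" and j: "Suc j < length p" and pj: "p ! j = lv (store s l)" and pv: "p ! Suc j = v'"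
    and key: "lex_le M (lr (store s l)) (child_f (store s) l v')"
  shows "tracking_kept s s' p l j"
proof -
  let ?x = "child c h s l v'"
  have IS: "inv_sets s" and IM: "inv_mode s" using I unfolding rme_inv_def by auto
  have lF: "l < fresh s" using IM m inv_sets_fresh(2)[OF IS] unfolding inv_mode_def by auto
  have same: "store s' l = store s l" using st lF by simp
  have gx: "vle M (lg ?x) (vadd (lg (store s l)) (seg_cost c p j (Suc j)))"
    using pj pv unfolding child_simps seg_cost_single vle_def by simp
  from br consider (below_key) "lex_less M (child_f (store s) l v') (lr (store s l))"
    | (pruned) "frontier_check M s' (fresh s) \<or> sol_check M s' (fresh s)"
    | (deferred) "R = Some (lexmin M rn (child_f (store s) l v'))"
    | (inserted) "opn s' = insert (fresh s) (opn s)"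
    by blast
  then show ?thesis
  proof cases
    case below_key
    then show ?thesis using lex_le_imp_not_less key by blast
  next
    case pruned
    then show ?thesis using tracking_kept_pruned_child[OF I st hi al so p j pj pv] by blast
  next
    case deferred
    then have "pending s' l j p"
      unfolding pending_def child_f_def using m' same j pv lexmin_lex_le_new by (auto simp: child_f_def)
    then show ?thesis unfolding tracking_kept_def using same by simp
  next
    case inserted
    then have "pending s' (fresh s) (Suc j) p"
      unfolding pending_def using hi inv_sets_fresh(2)[OF IS] by auto
    then have "tracked s' p (Suc j) (lg ?x)"
      using tracked_at_label j pv st vle_refl by (simp add: child_simps)
    then show ?thesis unfolding tracking_kept_def using gx j by blast
  qed
qed

lemma inv_tracking_exp_child:
  assumes I: "rme_inv s" and m: "mode s = Exp l (v' # todo) rn"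
    and st: "store s' = (store s)(fresh s := child c h s l v')" and hi: "hist s' = hist s"
    and al: "alpha s' = alpha s" and so: "sol s' = sol s" and m': "mode s' = Exp l todo R"
    and br: "(opn s' = opn s \<and> R = rn \<and> lex_less M (child_f (store s) l v') (lr (store s l))) \<or>
             (opn s' = opn s \<and> R = rn \<and> (frontier_check M s' (fresh s) \<or> sol_check M s' (fresh s))) \<or>
             (opn s' = opn s \<and> R = Some (lexmin M rn (child_f (store s) l v'))) \<or>
             (opn s' = insert (fresh s) (opn s) \<and> R = rn)"
  shows "inv_tracking s'"
proof -
  have IS: "inv_sets s" and IT: "inv_tracking s" and IM: "inv_mode s"
    using I unfolding rme_inv_def by auto
  have lF: "l < fresh s" using IM m inv_sets_fresh(2)[OF IS] unfolding inv_mode_def by auto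
  have old: "store s' i = store s i" if "i < fresh s" for i using that st by simp
  have cf: "child_f (store s') i = child_f (store s) i" if "i < fresh s" for i
    using old[OF that] unfolding child_f_def by simp
  have opn_sub: "opn s \<subseteq> opn s'" using br by auto
  show ?thesis
  proof (rule inv_tracking_transfer[OF IT])
    show "covered s T \<Longrightarrow> covered s' T" for T
      unfolding covered_def using old inv_sets_fresh(3)[OF IS] so by auto
  next
    fix l0
    assume "l0 \<in> hist s'"
    then show "(l0 \<in> hist s \<and> lv (store s' l0) = lv (store s l0) \<and> lg (store s' l0) = lg (store s l0)) \<or>
        (\<forall>p i. dest_path p \<longrightarrow> Suc i < length p \<longrightarrow> p ! i = lv (store s' l0) \<longrightarrow> pending s' l0 i p)"
      using hi old inv_sets_fresh(2)[OF IS] by auto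
  next
    fix p l2 j
    assume p: "dest_path p" and pj: "lv (store s l2) = p ! j" and act: "pending s l2 j p"
    consider (opened) "l2 \<in> opn s" "l2 \<in> hist s \<longrightarrow> Suc j < length p \<and>
        lex_le M (lr (store s l2)) (child_f (store s) l2 (p ! Suc j))"
      | (deferred) r where "l2 = l" "Suc j < length p" "rn = Some r" "lex_le M r (child_f (store s) l (p ! Suc j))"
      | (todo) "l2 = l" "Suc j < length p" "p ! Suc j \<in> set todo"
          "lex_le M (lr (store s l)) (child_f (store s) l (p ! Suc j))"
      | (generated) "l2 = l" "Suc j < length p" "p ! Suc j = v'"
          "lex_le M (lr (store s l)) (child_f (store s) l (p ! Suc j))"
      using act m unfolding pending_def by auto
    then show "tracking_kept s s' p l2 j"
    proof cases
      case opened
      then have "l2 < fresh s" using inv_sets_fresh(1)[OF IS] by blast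
      then have "pending s' l2 j p" using opened opn_sub old cf hi unfolding pending_def by auto
      then show ?thesis unfolding tracking_kept_def using old \<open>l2 < fresh s\<close> by simp
    next
      case deferred
      have "\<exists>r'. R = Some r' \<and> lex_le M r' (child_f (store s) l (p ! Suc j))"
        using br deferred lexmin_lex_le_old[OF deferred(3)] lex_le_trans by blast
      then have "pending s' l j p" unfolding pending_def using deferred m' cf[OF lF] by auto
      then show ?thesis unfolding tracking_kept_def using old lF deferred(1) by simp
    next
      case todo
      then have "pending s' l j p" unfolding pending_def using m' cf[OF lF] old[OF lF] by auto
      then show ?thesis unfolding tracking_kept_def using old lF todo(1) by simp
    next
      case generated
      then show ?thesis
        using tracking_kept_generated_child[OF I m st hi al so m' br p generated(2)] pj by simp
    qed
  qed
qed

lemma rme_inv_child_outcome: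
  assumes I: "rme_inv s" and m: "mode s = Exp l (v' # todo) rn"
    and s': "s' = (add_label s (child c h s l v'))\<lparr>opn := Op, mode := Exp l todo R\<rparr>"
    and br: "(Op = opn s \<and> R = rn \<and> lex_less M (child_f (store s) l v') (lr (store s l))) \<or>
             (Op = opn s \<and> R = rn \<and> (frontier_check M s' (fresh s) \<or> sol_check M s' (fresh s))) \<or>
             (Op = opn s \<and> R = Some (lexmin M rn (child_f (store s) l v')) \<and>
                lex_less M (vadd (lr (store s l)) C) (child_f (store s) l v')) \<or>
             (Op = insert (fresh s) (opn s) \<and> R = rn \<and> \<not> frontier_check M s' (fresh s))"
  shows "rme_inv s'"
proof -
  have IL: "inv_labels s" and IS: "inv_sets s" and IF: "inv_frontier s" and IO: "inv_solutions s"
    and IM: "inv_mode s"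
    using I unfolding rme_inv_def by auto
  have lh: "l \<in> hist s" and e: "(lv (store s l), v') \<in> E"
    using IM m unfolding inv_mode_def succs_def by auto
  have lF: "l < fresh s" using inv_sets_fresh(2)[OF IS lh] .
  have F: "store s' = (store s)(fresh s := child c h s l v')" "fresh s' = Suc (fresh s)" "hist s' = hist s"
    "alpha s' = alpha s" "sol s' = sol s" "opn s' = Op" "mode s' = Exp l todo R"
    using s' unfolding add_label_def by auto
  have old: "\<forall>i<fresh s. store s' i = store s i" using F(1) by simp
  have Fno: "fresh s \<notin> opn s" using inv_sets_fresh(1)[OF IS] by blast
  have "inv_labels s'" using inv_labels_add_child[OF IL lF e F(1-3)] .
  moreover have "inv_sets s'"
    by (rule inv_sets_add_child[OF IL IS IF lh e F(1-5)]) (use br F(6) Fno in auto)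
  moreover have "inv_frontier s'" using inv_frontier_extend[OF IF IS old F(3,4)] .
  moreover have "inv_solutions s'" using inv_solutions_extend[OF IO IS old F(5)] .
  moreover have "inv_mode s'"
    by (rule inv_mode_exp_child[OF IM m lF old F(3)]) (use br F(6,7) in auto)
  moreover have "inv_tracking s'"
    by (rule inv_tracking_exp_child[OF I m F(1,3,4,5,7)]) (use br F(6) in auto)
  ultimately show ?thesis unfolding rme_inv_def by simp
qed

lemma rme_inv_exp_child:
  assumes I: "rme_inv s" and m: "mode s = Exp l (v' # todo) rn"
    and x: "x = child c h s l v'" and s1: "s1 = add_label s x"
    and s': "s' = (if lex_less M (lf x) (lr (store s l)) then s1\<lparr>mode := Exp l todo rn\<rparr>
        else if frontier_check M s1 (fresh s) \<or> sol_check M s1 (fresh s) then s1\<lparr>mode := Exp l todo rn\<rparr>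
        else if lex_less M (vadd (lr (store s l)) C) (lf x)
          then s1\<lparr>mode := Exp l todo (Some (lexmin M rn (lf x)))\<rparr>
        else s1\<lparr>opn := insert (fresh s) (opn s1), mode := Exp l todo rn\<rparr>)"
  shows "rme_inv s'"
proof -
  let ?f = "child_f (store s) l v'"
  have fx: "lf x = ?f" using x by (simp add: child_simps)
  have same_checks: "frontier_check M (s1\<lparr>opn := ops, mode := md\<rparr>) (fresh s) = frontier_check M s1 (fresh s)"
    "sol_check M (s1\<lparr>opn := ops, mode := md\<rparr>) (fresh s) = sol_check M s1 (fresh s)" for ops md
    unfolding frontier_check_def sol_check_def by simp_all
  note outcome = rme_inv_child_outcome[OF I m, folded x s1]
  consider (below_key) "lex_less M ?f (lr (store s l))"
    | (pruned) "\<not> lex_less M ?f (lr (store s l))" "frontier_check M s1 (fresh s) \<or> sol_check M s1 (fresh s)"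
    | (deferred) "\<not> lex_less M ?f (lr (store s l))" "\<not> (frontier_check M s1 (fresh s) \<or> sol_check M s1 (fresh s))"
        "lex_less M (vadd (lr (store s l)) C) ?f"
    | (inserted) "\<not> lex_less M ?f (lr (store s l))" "\<not> (frontier_check M s1 (fresh s) \<or> sol_check M s1 (fresh s))"
        "\<not> lex_less M (vadd (lr (store s l)) C) ?f"
    by blast
  then show ?thesis
  proof cases
    case below_key
    then have "s' = s1\<lparr>opn := opn s, mode := Exp l todo rn\<rparr>" using s' fx s1 by (simp add: add_label_def)
    then show ?thesis by (rule outcome) (use below_key in simp)
  next
    case pruned
    then have s'': "s' = s1\<lparr>opn := opn s, mode := Exp l todo rn\<rparr>" using s' fx s1 by (simp add: add_label_def)
    then show ?thesis by (rule outcome) (use pruned same_checks s'' in simp)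
  next
    case deferred
    then have "s' = s1\<lparr>opn := opn s, mode := Exp l todo (Some (lexmin M rn ?f))\<rparr>"
      using s' fx s1 by (simp add: add_label_def)
    then show ?thesis by (rule outcome) (use deferred in simp)
  next
    case inserted
    then have s'': "s' = s1\<lparr>opn := insert (fresh s) (opn s), mode := Exp l todo rn\<rparr>"
      using s' fx s1 by (simp add: add_label_def)
    then show ?thesis by (rule outcome) (use inserted same_checks s'' in simp)
  qed
qed

text \<open>With \<open>D = 0\<close> the subroutine PIDMOA* is never entered, as \<open>h\<close> is non-negative.\<close>
lemma open_label_no_pid:
  assumes I: "rme_inv s" and lo: "l \<in> opn s"
  shows "\<not> vlt M (h (lv (store s l))) (\<lambda>_. 0)"
proof -
  have "lv (store s l) \<in> V"
    using I inv_sets_fresh(1)[OF _ lo] unfolding rme_inv_def inv_labels_def by auto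
  then show ?thesis using h_nonneg M_pos unfolding vlt_def by force
qed

lemma rme_inv_modes: "rme_inv s \<Longrightarrow> mode s = Main \<or> mode s = Done \<or> (\<exists>l todo rn. mode s = Exp l todo rn)"
  unfolding rme_inv_def inv_mode_def by blast

lemma rme_inv_step:
  assumes st: "rme_step E c h vd M C (\<lambda>_. 0) s s'" and I: "rme_inv s"
  shows "rme_inv s'"
  using st
proof cases
  case main_done
  then show ?thesis using rme_inv_main_done[OF I] by simp
next
  case (main_discard l)
  then show ?thesis using rme_inv_main_discard[OF I] by simp
next
  case (main_goal l)
  then show ?thesis using rme_inv_main_goal[OF I] by simp
next
  case (main_pid l)
  then show ?thesis using open_label_no_pid[OF I] by blast
next
  case (main_exp l xs)
  then show ?thesis using rme_inv_main_exp[OF I] unfolding succs_def by simp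
next
  case (exp_child l v' todo rn x s1 l')
  show ?thesis using exp_child(1) unfolding exp_child(5) by (rule rme_inv_exp_child[OF I exp_child(2-4)])
next
  case (exp_end_inf l)
  then show ?thesis using rme_inv_exp_end_inf[OF I] by simp
next
  case (exp_end_reinsert l r)
  then show ?thesis using rme_inv_exp_end_reinsert[OF I] by simp
qed (use rme_inv_modes[OF I] in simp_all)

lemma rme_inv_reachable:
  "(rme_step E c h vd M C (\<lambda>_. 0))\<^sup>*\<^sup>* (rme_init h vs) s \<Longrightarrow> rme_inv s"
  by (induction rule: rtranclp_induct) (auto intro: rme_inv_init rme_inv_step)

section \<open>Correctness of the returned set\<close>

lemma covered_when_done:
  assumes I: "rme_inv s" and d: "mode s = Done" and q: "st_path E vs vd q"
  shows "\<exists>y\<in>sol s. vle M (lg (store s y)) (path_cost c q)"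
proof -
  have "opn s = {}" using I d unfolding rme_inv_def inv_mode_def by auto
  moreover have "tracked s q 0 (\<lambda>_. 0)" using I q unfolding rme_inv_def inv_tracking_def by blast
  ultimately have "covered s (vadd (\<lambda>_. 0) (seg_cost c q 0 (length q - 1)))"
    unfolding tracked_def pending_def using d by auto
  then show ?thesis unfolding covered_def seg_cost_whole vadd_def by simp
qed

lemma result_paths_eq:
  assumes I: "rme_inv s"
  shows "result_paths s = label_path (store s) ` sol s"
proof -
  have IL: "inv_labels s" and IS: "inv_sets s" using I unfolding rme_inv_def by auto
  show ?thesis
    unfolding result_paths_def
    using represents_label_path[OF IL] label_path_props[OF IL] inv_sets_fresh(3)[OF IS] by blast
qed

lemma solution_label_path:
  assumes I: "rme_inv s" and x: "x \<in> sol s"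
  shows "st_path E vs vd (label_path (store s) x)" "path_cost c (label_path (store s) x) = lg (store s x)"
proof -
  have IL: "inv_labels s" and IS: "inv_sets s" and IO: "inv_solutions s" using I unfolding rme_inv_def by auto
  have "lv (store s x) = vd" using IO x unfolding inv_solutions_def by blast
  then show "st_path E vs vd (label_path (store s) x)" "path_cost c (label_path (store s) x) = lg (store s x)"
    using label_path_props[OF IL inv_sets_fresh(3)[OF IS x]] last_label_path[of "store s" x]
    unfolding st_path_def by simp_all
qed

lemma solution_paths_pareto:
  assumes I: "rme_inv s" and d: "mode s = Done"
  shows "label_path (store s) ` sol s \<subseteq> pareto_paths E c M vs vd"
proof
  fix p
  assume "p \<in> label_path (store s) ` sol s"
  then obtain x where x: "x \<in> sol s" "p = label_path (store s) x" by blast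
  have "\<not> vdom M (path_cost c q) (lg (store s x))" if q: "st_path E vs vd q" for q
  proof
    assume dom: "vdom M (path_cost c q) (lg (store s x))"
    obtain y where y: "y \<in> sol s" "vle M (lg (store s y)) (path_cost c q)"
      using covered_when_done[OF I d q] by blast
    show False
    proof (cases "y = x")
      case True
      then show False using y(2) dom unfolding vdom_def vle_def veq_def by (meson order_antisym)
    next
      case False
      then show False
        using I y vdom_imp_vle[OF dom] vle_trans x(1) inv_solutions_antichain unfolding rme_inv_def by metis
    qed
  qed
  then show "p \<in> pareto_paths E c M vs vd"
    unfolding pareto_paths_def using solution_label_path[OF I x(1)] x(2) by auto
qed

lemma solution_paths_cost_unique:
  assumes I: "rme_inv s"
  shows "cost_unique c M (label_path (store s) ` sol s)"
  unfolding cost_unique_def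
proof (intro ballI impI)
  fix p q
  assume "p \<in> label_path (store s) ` sol s" "q \<in> label_path (store s) ` sol s" "p \<noteq> q"
  then obtain x y where xy: "x \<in> sol s" "y \<in> sol s" "p = label_path (store s) x" "q = label_path (store s) y"
    "x \<noteq> y" by blast
  then have "\<not> vle M (lg (store s x)) (lg (store s y))"
    using I inv_solutions_antichain unfolding rme_inv_def by blast
  then show "\<not> veq M (path_cost c p) (path_cost c q)"
    using solution_label_path(2)[OF I xy(1)] solution_label_path(2)[OF I xy(2)] xy(3,4)
    unfolding veq_def vle_def by auto
qed

text \<open>Maximality: any Pareto-optimal path \<open>q\<close> is weakly dominated by, hence has the same cost as,
  some returned path, so \<open>q\<close> can only be added by breaking cost-uniqueness.\<close>
lemma solution_paths_maximal:
  assumes I: "rme_inv s" and d: "mode s = Done"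
    and Q: "label_path (store s) ` sol s \<subseteq> Q" "Q \<subseteq> pareto_paths E c M vs vd" "cost_unique c M Q"
  shows "Q \<subseteq> label_path (store s) ` sol s"
proof
  fix q
  assume qQ: "q \<in> Q"
  then have qp: "q \<in> pareto_paths E c M vs vd" using Q by auto
  then obtain y where y: "y \<in> sol s" "vle M (lg (store s y)) (path_cost c q)"
    using covered_when_done[OF I d] unfolding pareto_paths_def by blast
  let ?py = "label_path (store s) y"
  have "\<not> vdom M (path_cost c ?py) (path_cost c q)"
    using qp solution_label_path(1)[OF I y(1)] unfolding pareto_paths_def by blast
  then have "veq M (path_cost c q) (path_cost c ?py)"
    using y(2) solution_label_path(2)[OF I y(1)] veq_sym unfolding vdom_def by metis
  moreover have "?py \<in> Q" using Q y(1) by blast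
  ultimately have "q = ?py" using Q(3) qQ unfolding cost_unique_def by blast
  then show "q \<in> label_path (store s) ` sol s" using y(1) by blast
qed

lemma done_result_correct:
  assumes I: "rme_inv s" and d: "mode s = Done"
  shows "max_cost_unique_pareto_set E c M vs vd (result_paths s)"
  unfolding max_cost_unique_pareto_set_def result_paths_eq[OF I]
  using solution_paths_pareto[OF I d] solution_paths_cost_unique[OF I] solution_paths_maximal[OF I d]
  by blast

section \<open>Termination\<close>

definition label_bound :: nat where
  "label_bound = card {xs. set xs \<subseteq> V \<and> length xs \<le> card V}"

text \<open>Distinct expanded labels have distinct simple paths: equal paths would give equal vertex and
  cost, which the frontier forbids.\<close>
lemma card_hist_le_label_bound:
  assumes I: "rme_inv s"
  shows "card (hist s) \<le> label_bound"
proof -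
  have IL: "inv_labels s" and IS: "inv_sets s" and IF: "inv_frontier s" using I unfolding rme_inv_def by auto
  note props = label_path_props[OF IL inv_sets_fresh(2)[OF IS]]
  have "inj_on (label_path (store s)) (hist s)"
  proof (rule inj_onI)
    fix a b
    assume a: "a \<in> hist s" and b: "b \<in> hist s" and eq: "label_path (store s) a = label_path (store s) b"
    have "lv (store s a) = lv (store s b)" using eq last_label_path by metis
    moreover have "lg (store s a) = lg (store s b)" using eq props[OF a] props[OF b] by metis
    ultimately show "a = b" using inv_frontier_cost_unique[OF IF a b] by (simp add: veq_def)
  qed
  moreover have "label_path (store s) ` hist s \<subseteq> {xs. set xs \<subseteq> V \<and> length xs \<le> card V}"
  proof clarify
    fix a
    assume a: "a \<in> hist s"
    have sV: "set (label_path (store s) a) \<subseteq> V" using props[OF a] by simp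
    have "distinct (label_path (store s) a)" using IS a unfolding inv_sets_def by blast
    then have "length (label_path (store s) a) = card (set (label_path (store s) a))" by (simp add: distinct_card)
    also have "\<dots> \<le> card V" using card_mono[OF finite_V sV] .
    finally show "set (label_path (store s) a) \<subseteq> V \<and> length (label_path (store s) a) \<le> card V" using sV by simp
  qed
  ultimately show ?thesis
    unfolding label_bound_def by (rule card_inj_on_le[OF _ _ finite_lists_length_le[OF finite_V]])
qed

definition deferred_succs :: "'v rstate \<Rightarrow> nat \<Rightarrow> 'v set" where
  "deferred_succs s l = {v' \<in> succs (lv (store s l)). lex_less M (lr (store s l)) (child_f (store s) l v')}"

lemma deferred_succs_cong: "store s' l = store s l \<Longrightarrow> deferred_succs s' l = deferred_succs s l"
  unfolding deferred_succs_def child_f_def by simp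

definition stopped_measure :: "'v rstate \<Rightarrow> nat" where
  "stopped_measure s = (if mode s = Done then 0 else 1)"

definition unexpanded_measure :: "'v rstate \<Rightarrow> nat" where
  "unexpanded_measure s = label_bound - card (hist s)"

definition deferred_measure :: "'v rstate \<Rightarrow> nat" where
  "deferred_measure s = (\<Sum>l\<in>hist s. card (deferred_succs s l))"

definition reopened_measure :: "'v rstate \<Rightarrow> nat" where
  "reopened_measure s = 2 * card (opn s \<inter> hist s) + (case mode s of Exp _ _ _ \<Rightarrow> 1 | _ \<Rightarrow> 0)"

definition todo_measure :: "'v rstate \<Rightarrow> nat" where
  "todo_measure s = (case mode s of Exp _ todo _ \<Rightarrow> length todo | _ \<Rightarrow> 0)"

definition fresh_open_measure :: "'v rstate \<Rightarrow> nat" where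
  "fresh_open_measure s = card (opn s - hist s)"

definition rme_measures :: "('v rstate \<Rightarrow> nat) list" where
  "rme_measures = [stopped_measure, unexpanded_measure, deferred_measure, reopened_measure, todo_measure,
    fresh_open_measure]"

lemma finite_opn: "rme_inv s \<Longrightarrow> finite (opn s)"
  unfolding rme_inv_def inv_sets_def by (meson finite_lessThan finite_subset le_sup_iff)

lemma finite_hist: "rme_inv s \<Longrightarrow> finite (hist s)"
  unfolding rme_inv_def inv_sets_def by (meson finite_lessThan finite_subset le_sup_iff)

lemma measures_decrease_remove_open:
  assumes I: "rme_inv s" and m: "mode s = Main" and lo: "l \<in> opn s"
    and s': "opn s' = opn s - {l}" "hist s' = hist s" "store s' = store s" "mode s' = Main"
  shows "(s', s) \<in> measures rme_measures"
proof -
  have fo: "finite (opn s)" using finite_opn[OF I] .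
  have "deferred_succs s' = deferred_succs s" by (rule ext, rule deferred_succs_cong) (simp add: s'(3))
  then have same: "stopped_measure s' = stopped_measure s" "unexpanded_measure s' = unexpanded_measure s"
    "deferred_measure s' = deferred_measure s"
    unfolding stopped_measure_def unexpanded_measure_def deferred_measure_def using s' m by simp_all
  show ?thesis
  proof (cases "l \<in> hist s")
    case True
    have "opn s' \<inter> hist s' = (opn s \<inter> hist s) - {l}" using s' by auto
    then have "card (opn s' \<inter> hist s') < card (opn s \<inter> hist s)"
      using card_Diff1_less[of "opn s \<inter> hist s" l] fo True lo by auto
    then have "reopened_measure s' < reopened_measure s" unfolding reopened_measure_def using s' m by simp
    then show ?thesis using same by (simp add: rme_measures_def)
  next
    case False
    have "opn s' \<inter> hist s' = opn s \<inter> hist s" using s' False by auto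
    then have "reopened_measure s' = reopened_measure s" "todo_measure s' = todo_measure s"
      unfolding reopened_measure_def todo_measure_def using s' m by simp_all
    moreover have "opn s' - hist s' = (opn s - hist s) - {l}" using s' by auto
    then have "fresh_open_measure s' < fresh_open_measure s"
      unfolding fresh_open_measure_def using card_Diff1_less[of "opn s - hist s" l] fo False lo by auto
    ultimately show ?thesis using same by (simp add: rme_measures_def)
  qed
qed

lemma measures_decrease_main_exp:
  assumes I: "rme_inv s" and I': "rme_inv s'" and m: "mode s = Main" and lo: "l \<in> opn s"
    and s': "s' = (update_frontier M (s\<lparr>opn := opn s - {l}\<rparr>) l)\<lparr>mode := Exp l xs None\<rparr>"
  shows "(s', s) \<in> measures rme_measures"
proof -
  have F: "store s' = store s" "opn s' = opn s - {l}" "hist s' = insert l (hist s)" "mode s' = Exp l xs None"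
    using s' by (simp_all add: update_frontier_fields)
  have stopped: "stopped_measure s' = stopped_measure s" unfolding stopped_measure_def using F m by simp
  show ?thesis
  proof (cases "l \<in> hist s")
    case True
    then have "hist s' = hist s" using F by auto
    moreover have "deferred_succs s' = deferred_succs s" by (rule ext, rule deferred_succs_cong) (simp add: F(1))
    ultimately have "unexpanded_measure s' = unexpanded_measure s" "deferred_measure s' = deferred_measure s"
      unfolding unexpanded_measure_def deferred_measure_def by simp_all
    moreover have "opn s' \<inter> hist s' = (opn s \<inter> hist s) - {l}" using F True by auto
    then have "card (opn s' \<inter> hist s') < card (opn s \<inter> hist s)"
      using card_Diff1_less[of "opn s \<inter> hist s" l] finite_opn[OF I] True lo by auto
    then have "reopened_measure s' < reopened_measure s" unfolding reopened_measure_def using F m by simp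
    ultimately show ?thesis using stopped by (simp add: rme_measures_def)
  next
    case False
    have "card (hist s') = Suc (card (hist s))" using F False finite_hist[OF I] by simp
    moreover have "card (hist s') \<le> label_bound" using card_hist_le_label_bound[OF I'] .
    ultimately have "unexpanded_measure s' < unexpanded_measure s" unfolding unexpanded_measure_def by simp
    then show ?thesis using stopped by (simp add: rme_measures_def)
  qed
qed

lemma measures_decrease_exp_child:
  assumes I: "rme_inv s" and m: "mode s = Exp l (v' # todo) rn"
    and s': "store s' = (store s)(fresh s := x)" "hist s' = hist s" "mode s' = Exp l todo R"
       "opn s' = opn s \<or> opn s' = insert (fresh s) (opn s)"
  shows "(s', s) \<in> measures rme_measures"
proof -
  have IS: "inv_sets s" using I unfolding rme_inv_def by simp
  have Fnh: "fresh s \<notin> hist s" using inv_sets_fresh(2)[OF IS] by blast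
  have "deferred_measure s' = deferred_measure s"
    unfolding deferred_measure_def s'(2)
  proof (rule sum.cong)
    fix l0
    assume "l0 \<in> hist s"
    then have "store s' l0 = store s l0" using Fnh s'(1) by auto
    then show "card (deferred_succs s' l0) = card (deferred_succs s l0)" using deferred_succs_cong by metis
  qed simp
  moreover have "opn s' \<inter> hist s' = opn s \<inter> hist s" using s'(2,4) Fnh by auto
  then have "reopened_measure s' = reopened_measure s" unfolding reopened_measure_def using s' m by simp
  moreover have "stopped_measure s' = stopped_measure s" "unexpanded_measure s' = unexpanded_measure s"
    "todo_measure s' < todo_measure s"
    unfolding stopped_measure_def unexpanded_measure_def todo_measure_def using s' m by simp_all
  ultimately show ?thesis by (simp add: rme_measures_def)
qed

lemma measures_decrease_exp_end_inf:
  assumes m: "mode s = Exp l [] None"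
  shows "(s\<lparr>mode := Main\<rparr>, s) \<in> measures rme_measures"
proof -
  have "stopped_measure (s\<lparr>mode := Main\<rparr>) = stopped_measure s"
    "unexpanded_measure (s\<lparr>mode := Main\<rparr>) = unexpanded_measure s"
    "deferred_measure (s\<lparr>mode := Main\<rparr>) = deferred_measure s"
    "reopened_measure (s\<lparr>mode := Main\<rparr>) < reopened_measure s"
    unfolding stopped_measure_def unexpanded_measure_def deferred_measure_def deferred_succs_def
      reopened_measure_def using m by simp_all
  then show ?thesis by (simp add: rme_measures_def)
qed

text \<open>Reinsertion under the key \<open>r\<close> removes from the deferred successors of \<open>l\<close> the one whose
  child realised \<open>r\<close>.\<close>
lemma measures_decrease_exp_end_reinsert:
  assumes I: "rme_inv s" and m: "mode s = Exp l [] (Some r)"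
  shows "(s\<lparr>store := (store s)(l := (store s l)\<lparr>lr := r\<rparr>), opn := insert l (opn s), mode := Main\<rparr>, s)
    \<in> measures rme_measures" (is "(?s, s) \<in> _")
proof -
  have lh: "l \<in> hist s"
    and "\<exists>u\<in>succs (lv (store s l)). r = child_f (store s) l u \<and> lex_less M (lr (store s l)) r"
    using I m unfolding rme_inv_def inv_mode_def by auto
  then obtain u where u: "u \<in> succs (lv (store s l))" "r = child_f (store s) l u" "lex_less M (lr (store s l)) r"
    by blast
  have cf: "child_f (store ?s) l = child_f (store s) l" unfolding child_f_def by (simp add: fun_eq_iff)
  have new: "deferred_succs ?s l = {v' \<in> succs (lv (store s l)). lex_less M r (child_f (store s) l v')}"
    unfolding deferred_succs_def cf by simp
  have "deferred_succs ?s l \<subset> deferred_succs s l"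
  proof
    show "deferred_succs ?s l \<subseteq> deferred_succs s l"
      by (subst new) (auto simp: deferred_succs_def dest: lex_less_trans[OF u(3)])
    have "u \<in> deferred_succs s l" unfolding deferred_succs_def using u by simp
    moreover have "u \<notin> deferred_succs ?s l" unfolding new using u lex_less_irrefl[of M r] by simp
    ultimately show "deferred_succs ?s l \<noteq> deferred_succs s l" by blast
  qed
  moreover have "finite (deferred_succs s l)"
    unfolding deferred_succs_def by (rule finite_subset[OF _ finite_succs]) auto
  ultimately have lt: "card (deferred_succs ?s l) < card (deferred_succs s l)" by (rule psubset_card_mono[rotated])
  have "(\<Sum>l0\<in>hist s. card (deferred_succs ?s l0)) < (\<Sum>l0\<in>hist s. card (deferred_succs s l0))"
  proof (rule sum_strict_mono_ex1[OF finite_hist[OF I]])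
    show "\<forall>l0\<in>hist s. card (deferred_succs ?s l0) \<le> card (deferred_succs s l0)"
    proof
      fix l0
      show "card (deferred_succs ?s l0) \<le> card (deferred_succs s l0)"
      proof (cases "l0 = l")
        case False
        then have "deferred_succs ?s l0 = deferred_succs s l0" by (intro deferred_succs_cong) simp
        then show ?thesis by simp
      qed (use lt in simp)
    qed
    show "\<exists>l0\<in>hist s. card (deferred_succs ?s l0) < card (deferred_succs s l0)" using lh lt by blast
  qed
  then have "deferred_measure ?s < deferred_measure s" unfolding deferred_measure_def by simp
  moreover have "stopped_measure ?s = stopped_measure s" "unexpanded_measure ?s = unexpanded_measure s"
    unfolding stopped_measure_def unexpanded_measure_def using m by simp_all
  ultimately show ?thesis by (simp add: rme_measures_def)
qed

lemma rme_step_decreases: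
  assumes st: "rme_step E c h vd M C (\<lambda>_. 0) s s'" and I: "rme_inv s"
  shows "(s', s) \<in> measures rme_measures"
  using st
proof cases
  case main_done
  then show ?thesis by (simp add: rme_measures_def stopped_measure_def)
next
  case (main_discard l)
  then show ?thesis by (intro measures_decrease_remove_open[OF I, of l]) auto
next
  case (main_goal l)
  then show ?thesis by (intro measures_decrease_remove_open[OF I, of l]) auto
next
  case (main_pid l)
  then show ?thesis using open_label_no_pid[OF I] by blast
next
  case (main_exp l xs)
  then show ?thesis using measures_decrease_main_exp[OF I rme_inv_step[OF st I]] by blast
next
  case (exp_child l v' todo rn x s1 l')
  have "store s' = (store s)(fresh s := x)" "hist s' = hist s"
    "opn s' = opn s \<or> opn s' = insert (fresh s) (opn s)" "\<exists>R. mode s' = Exp l todo R"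
    using exp_child by (auto simp: add_label_def)
  then show ?thesis using measures_decrease_exp_child[OF I exp_child(2)] by blast
next
  case (exp_end_inf l)
  then show ?thesis using measures_decrease_exp_end_inf by simp
next
  case (exp_end_reinsert l r)
  then show ?thesis using measures_decrease_exp_end_reinsert[OF I] by simp
qed (use rme_inv_modes[OF I] in simp_all)

lemma rme_progress_open:
  assumes I: "rme_inv s" and m: "mode s = Main" and ne: "opn s \<noteq> {}"
  shows "\<exists>s'. rme_step E c h vd M C (\<lambda>_. 0) s s'"
proof -
  obtain l where l: "l \<in> opn s" "\<forall>l2\<in>opn s. lex_le M (lr (store s l)) (lr (store s l2))"
    using ex_lex_le_minimum[OF finite_opn[OF I] ne, of M "\<lambda>l. lr (store s l)"] by blast
  obtain xs where xs: "distinct xs" "set xs = {v'. (lv (store s l), v') \<in> E}"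
    using finite_distinct_list[OF finite_succs[unfolded succs_def]] by metis
  have no_pid: "\<not> vlt M (h (lv (store s l))) (\<lambda>_. 0)" using open_label_no_pid[OF I l(1)] .
  consider "frontier_check M s l \<or> sol_check M s l"
    | "\<not> frontier_check M s l" "\<not> sol_check M s l" "lv (store s l) = vd"
    | "\<not> frontier_check M s l" "\<not> sol_check M s l" "lv (store s l) \<noteq> vd" by blast
  then show ?thesis
  proof cases
    case 1
    then show ?thesis using rme_step.main_discard[OF m l] by blast
  next
    case 2
    then show ?thesis using rme_step.main_goal[OF m l] by blast
  next
    case 3
    then show ?thesis
      using rme_step.main_exp[where E = E and c = c and h = h and C = C and D = "\<lambda>_. 0", OF m l 3 no_pid xs]
      by blast
  qed
qed

lemma rme_progress:
  assumes I: "rme_inv s"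
  shows "mode s = Done \<or> (\<exists>s'. rme_step E c h vd M C (\<lambda>_. 0) s s')"
  using rme_inv_modes[OF I]
proof (elim disjE exE)
  assume m: "mode s = Main"
  then show ?thesis using rme_step.main_done[OF m] rme_progress_open[OF I m] by blast
next
  fix l todo rn
  assume m: "mode s = Exp l todo rn"
  show ?thesis
  proof (cases todo)
    case (Cons v' todo')
    then show ?thesis using rme_step.exp_child[OF m[unfolded Cons] refl refl refl] by blast
  next
    case Nil
    note rules = rme_step.exp_end_inf[where E = E and c = c and h = h and vd = vd and M = M and C = C
        and D = "\<lambda>_. 0"]
      rme_step.exp_end_reinsert[where E = E and c = c and h = h and vd = vd and M = M and C = C
        and D = "\<lambda>_. 0"]
    show ?thesis using m Nil rules by (cases rn) blast+
  qed
qed simp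

lemma rme_terminates: "rme_always_terminates E c h vs vd M C (\<lambda>_. 0)"
  unfolding rme_always_terminates_def
proof (intro conjI allI impI notI)
  fix s
  assume "(rme_step E c h vd M C (\<lambda>_. 0))\<^sup>*\<^sup>* (rme_init h vs) s"
  then show "mode s = Done \<or> (\<exists>s'. rme_step E c h vd M C (\<lambda>_. 0) s s')"
    using rme_progress rme_inv_reachable by blast
next
  assume "\<exists>f. f 0 = rme_init h vs \<and> (\<forall>n. rme_step E c h vd M C (\<lambda>_. 0) (f n) (f (Suc n)))"
  then obtain f where f0: "f 0 = rme_init h vs" and fs: "\<And>n. rme_step E c h vd M C (\<lambda>_. 0) (f n) (f (Suc n))"
    by blast
  have "(rme_step E c h vd M C (\<lambda>_. 0))\<^sup>*\<^sup>* (rme_init h vs) (f n)" for n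
    by (induction n) (use f0 fs in \<open>auto intro: rtranclp.rtrancl_into_rtrancl\<close>)
  then have "(f (Suc n), f n) \<in> measures rme_measures" for n
    using rme_step_decreases fs rme_inv_reachable by blast
  then show False using wf_measures[of rme_measures] unfolding wf_iff_no_infinite_down_chain by blast
qed

end

theorem theorem1:
  fixes V :: "'v set" and E :: "('v \<times> 'v) set" and c :: "'v \<Rightarrow> 'v \<Rightarrow> nat \<Rightarrow> real"
    and h :: "'v \<Rightarrow> nat \<Rightarrow> real" and vs vd :: 'v and M :: nat and C :: "nat \<Rightarrow> real"
  assumes "finite V" and "E \<subseteq> V \<times> V" and "vs \<in> V" and "vd \<in> V"
    and "0 < M"
    and "\<forall>(u, w)\<in>E. \<forall>i<M. 0 \<le> c u w i"
    and "consistent_heuristic V E c M vd h"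
    and "\<forall>i<M. 0 \<le> C i"
  shows "rme_always_terminates E c h vs vd M C (\<lambda>_. 0) \<and>
         (\<forall>s. (rme_step E c h vd M C (\<lambda>_. 0))\<^sup>*\<^sup>* (rme_init h vs) s \<and> mode s = Done \<longrightarrow>
              max_cost_unique_pareto_set E c M vs vd (result_paths s))"
proof -
  interpret rme_setting V E c h vs vd M C
    using assms by unfold_locales
  have "max_cost_unique_pareto_set E c M vs vd (result_paths s)"
    if "(rme_step E c h vd M C (\<lambda>_. 0))\<^sup>*\<^sup>* (rme_init h vs) s" "mode s = Done" for s
    using done_result_correct[OF rme_inv_reachable[OF that(1)] that(2)] .
  then show ?thesis using rme_terminates by blast
qed

end
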